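(* For any concept class $\mathcal C$ of functions $X\to\{-1,1\}$ (with $X$ finite), distribution $\mathcal D$ over $X$, and $\delta_{\mathrm{additional}}>0$, if an algorithm $A$ using $n$ samples $(\varepsilon,\delta)$-learns $\mathcal C$ over $\mathcal D$ with $\eta$-TV noise, then $A':=A\circ\Phi_{m\to n}$, where $$m:=O\!\left(\frac{n^4\log(2|X|)^2}{\delta_{\mathrm{additional}}^4}\right),$$ $(\varepsilon,\delta+\delta_{\mathrm{additional}})$-learns $\mathcal C$ over $\mathcal D$ with $\eta$-fixed-rate nasty noise.
   Context: An algorithm $(\varepsilon,\delta)$-learns $\mathcal C$ over $\mathcal D$ in a noise model if for every $c\in\mathcal C$ and every adversary strategy, with probability at least $1-\delta$ the output $h$ satisfies $\Pr_{x\sim\mathcal D}[h(x)\ne c(x)]\le\varepsilon$. $\mathcal D_c$ is the distribution of $(x,c(x))$, $x\sim\mathcal D$. $\eta$-TV noise: the adversary chooses any distribution $\mathcal D'$ on $X\times\{-1,1\}$ with $d_{\mathrm{TV}}(\mathcal D_c,\mathcal D')\le\eta$, and the sample consists of i.i.d. draws from $\mathcal D'$. $\eta$-fixed-rate nasty noise (with $m$ examples): a clean sample of $m$ i.i.d. examples from $\mathcal D_c$ is drawn; then an arbitrary (adversarially chosen, depending on the sample) subset of exactly $\lfloor\eta m\rfloor$ examples is replaced by arbitrary pairs in $X\times\{-1,1\}$. $\Phi_{m\to n}$ is the randomized map taking a sequence of $m$ examples to a uniformly random subsample of $n$ of them drawn without replacement; $A\circ\Phi_{m\to n}$ runs $A$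 on this subsample. *)

theory Defs
  imports "HOL-Probability.Probability"
begin

text \<open>Labels in {-1,1} are encoded as bool (True = 1, False = -1).
  The finite domain X is a finite set of naturals (any finite domain is isomorphic to one),
  so that the hidden constant of the O(.) bound can be quantified uniformly over all X.\<close>

type_synonym example = "nat \<times> bool"
type_synonym hypothesis = "nat \<Rightarrow> bool"
type_synonym algorithm = "example list \<Rightarrow> hypothesis pmf"

definition err :: "nat pmf \<Rightarrow> hypothesis \<Rightarrow> hypothesis \<Rightarrow> real" where
  "err D c h = measure_pmf.prob D {x. h x \<noteq> c x}"

definition labeled :: "nat pmf \<Rightarrow> hypothesis \<Rightarrow> example pmf" where
  "labeled D c = map_pmf (\<lambda>x. (x, c x)) D"

definition tv_dist :: "'a pmf \<Rightarrow> 'a pmf \<Rightarrow> real" where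
  "tv_dist p q = (SUP A. \<bar>measure_pmf.prob p A - measure_pmf.prob q A\<bar>)"

definition success_prob :: "nat pmf \<Rightarrow> hypothesis \<Rightarrow> real \<Rightarrow> example list pmf \<Rightarrow> algorithm \<Rightarrow> real" where
  "success_prob D c \<epsilon> S A = measure_pmf.prob (bind_pmf S A) {h. err D c h \<le> \<epsilon>}"

definition TV_learns :: "nat set \<Rightarrow> hypothesis set \<Rightarrow> nat pmf \<Rightarrow> nat \<Rightarrow> algorithm \<Rightarrow> real \<Rightarrow> real \<Rightarrow> real \<Rightarrow> bool" where
  "TV_learns X C D n A \<epsilon> \<delta> \<eta> \<longleftrightarrow>
     (\<forall>c\<in>C. \<forall>D' :: example pmf. set_pmf D' \<subseteq> X \<times> UNIV \<longrightarrow> tv_dist (labeled D c) D' \<le> \<eta> \<longrightarrow>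
        success_prob D c \<epsilon> (replicate_pmf n D') A \<ge> 1 - \<delta>)"

definition nasty_adversary :: "nat set \<Rightarrow> nat pmf \<Rightarrow> hypothesis \<Rightarrow> real \<Rightarrow> nat \<Rightarrow> (example list \<Rightarrow> example list) \<Rightarrow> bool" where
  "nasty_adversary X D c \<eta> m adv \<longleftrightarrow>
     (\<forall>S \<in> set_pmf (replicate_pmf m (labeled D c)).
        length (adv S) = m \<and> set (adv S) \<subseteq> X \<times> UNIV \<and>
        (\<exists>I \<subseteq> {..<m}. card I = nat \<lfloor>\<eta> * real m\<rfloor> \<and> (\<forall>i<m. i \<notin> I \<longrightarrow> adv S ! i = S ! i)))"

definition nasty_learns :: "nat set \<Rightarrow> hypothesis set \<Rightarrow> nat pmf \<Rightarrow> nat \<Rightarrow> algorithm \<Rightarrow> real \<Rightarrow> real \<Rightarrow> real \<Rightarrow> bool" where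
  "nasty_learns X C D m A \<epsilon> \<delta> \<eta> \<longleftrightarrow>
     (\<forall>c\<in>C. \<forall>adv. nasty_adversary X D c \<eta> m adv \<longrightarrow>
        success_prob D c \<epsilon> (map_pmf adv (replicate_pmf m (labeled D c))) A \<ge> 1 - \<delta>)"

definition subsample :: "nat \<Rightarrow> 'a list \<Rightarrow> 'a list pmf" where
  "subsample n S = map_pmf (\<lambda>is. map (\<lambda>i. S ! i) is)
     (pmf_of_set {is. distinct is \<and> length is = n \<and> set is \<subseteq> {..<length S}})"

definition compose_subsample :: "algorithm \<Rightarrow> nat \<Rightarrow> algorithm" where
  "compose_subsample A n = (\<lambda>S. bind_pmf (subsample n S) A)"

end

theory Submission
  imports Defs
begin

text \<open>
  Write S for the clean sample, S' = adv S for the corrupted one, and let pi be a uniformly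
  random sequence of N distinct positions. Let Y_s be the corrupted example at pi_s and G_s the
  history: the positions pi_0, ..., pi_(s-1) together with the corrupted examples found there.
  Given G_s, all later Y have the same law, so the conditional entropies H(Y_s | G_s) are
  non-increasing in s; as they lie in [0, ln |Z|], among L consecutive blocks of n indices there
  is one, starting at t, on which they drop by at most ln |Z| / L. On that block, given G_t, the window
  Y_t, ..., Y_(t+n-1) is within KL divergence n (H(Y_t | G_t) - H(Y_(t+n) | G_(t+n))) of n
  independent draws from the conditional law q of Y_t. This q differs from the conditional law u
  of the clean example at pi_t only when pi_t is a corrupted position, which has probability at
  most k / (m - t); and u is close to the clean distribution p on average, because the mutual
  information of G_t and the clean example at pi_t is at most t ln |Z| / (m - t). Mixing q with
  p gives a distribution within TV distance eta of p, on which the learner succeeds, and the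
  window is a uniform subsample of n corrupted examples. The three error terms add up to at
  most delta_a once m >= 1000 n^4 ln^2 |Z| / delta_a^4.
\<close>

section \<open>Entropy and relative entropy of finitely supported distributions\<close>

definition entropy_pmf :: "'a pmf \<Rightarrow> real" where
  "entropy_pmf \<mu> = (\<Sum>x\<in>set_pmf \<mu>. - (pmf \<mu> x * ln (pmf \<mu> x)))"

text \<open>\<open>KL_pmf P Q\<close> is the divergence only if \<open>set_pmf P \<subseteq> set_pmf Q\<close>: otherwise the terms
  with \<open>pmf Q x = 0\<close> contribute \<open>ln 0 = 0\<close>. The lemmas below assume this inclusion.\<close>

definition KL_pmf :: "'a pmf \<Rightarrow> 'a pmf \<Rightarrow> real" where
  "KL_pmf P Q = (\<Sum>x\<in>set_pmf P. pmf P x * ln (pmf P x / pmf Q x))"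

definition cond_entropy_pmf :: "'w pmf \<Rightarrow> ('w \<Rightarrow> 'y) \<Rightarrow> ('w \<Rightarrow> 'g) \<Rightarrow> real" where
  "cond_entropy_pmf \<mu> Y G =
     entropy_pmf (map_pmf (\<lambda>\<omega>. (G \<omega>, Y \<omega>)) \<mu>) - entropy_pmf (map_pmf G \<mu>)"

definition mutual_info_pmf :: "'w pmf \<Rightarrow> ('w \<Rightarrow> 'a) \<Rightarrow> ('w \<Rightarrow> 'b) \<Rightarrow> real" where
  "mutual_info_pmf \<mu> A B =
     entropy_pmf (map_pmf A \<mu>) + entropy_pmf (map_pmf B \<mu>) - entropy_pmf (map_pmf (\<lambda>\<omega>. (A \<omega>, B \<omega>)) \<mu>)"

lemma expectation_pmf_finite:
  assumes "finite (set_pmf M)"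
  shows "measure_pmf.expectation M f = (\<Sum>x\<in>set_pmf M. pmf M x * f x)"
  using integral_measure_pmf_real[OF assms, of M f] by (simp add: mult.commute)

lemma sum_pmf_map_pmf:
  assumes "finite (set_pmf \<nu>)"
  shows "(\<Sum>z\<in>set_pmf \<nu>. pmf \<nu> z * \<phi> (f z)) = (\<Sum>a\<in>set_pmf (map_pmf f \<nu>). pmf (map_pmf f \<nu>) a * \<phi> a)"
proof -
  have "(\<Sum>z\<in>set_pmf \<nu>. pmf \<nu> z * \<phi> (f z)) = measure_pmf.expectation \<nu> (\<lambda>z. \<phi> (f z))"
    using expectation_pmf_finite[OF assms] by simp
  also have "\<dots> = measure_pmf.expectation (map_pmf f \<nu>) \<phi>" by simp
  also have "\<dots> = (\<Sum>a\<in>set_pmf (map_pmf f \<nu>). pmf (map_pmf f \<nu>) a * \<phi> a)"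
    using assms expectation_pmf_finite[of "map_pmf f \<nu>" \<phi>] by simp
  finally show ?thesis .
qed

lemma entropy_pmf_nonneg: "0 \<le> entropy_pmf \<mu>"
  unfolding entropy_pmf_def
proof (rule sum_nonneg)
  fix x assume "x \<in> set_pmf \<mu>"
  then have "0 < pmf \<mu> x" "pmf \<mu> x \<le> 1" by (auto simp: pmf_positive pmf_le_1)
  then show "0 \<le> - (pmf \<mu> x * ln (pmf \<mu> x))" by (simp add: mult_nonneg_nonpos)
qed

lemma entropy_pmf_map_inj:
  assumes "inj_on f (set_pmf \<mu>)"
  shows "entropy_pmf (map_pmf f \<mu>) = entropy_pmf \<mu>"
  unfolding entropy_pmf_def set_map_pmf
  by (subst sum.reindex[OF assms]) (auto intro!: sum.cong simp: pmf_map_inj[OF assms])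

lemma entropy_pmf_map_cong_inj:
  assumes "inj_on h (f ` set_pmf \<mu>)" "\<And>\<omega>. \<omega> \<in> set_pmf \<mu> \<Longrightarrow> g \<omega> = h (f \<omega>)"
  shows "entropy_pmf (map_pmf g \<mu>) = entropy_pmf (map_pmf f \<mu>)"
proof -
  have "map_pmf g \<mu> = map_pmf h (map_pmf f \<mu>)"
    unfolding map_pmf_comp using assms(2) by (intro map_pmf_cong) auto
  then show ?thesis using entropy_pmf_map_inj[of h "map_pmf f \<mu>"] assms(1) by simp
qed

lemma entropy_pmf_map_pair_swap:
  "entropy_pmf (map_pmf (\<lambda>\<omega>. (a \<omega>, b \<omega>)) \<mu>) = entropy_pmf (map_pmf (\<lambda>\<omega>. (b \<omega>, a \<omega>)) \<mu>)"
  by (rule entropy_pmf_map_cong_inj[where h = "\<lambda>(x, y). (y, x)"]) (auto simp: inj_on_def)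

lemma entropy_pmf_le_ln_card:
  assumes "finite A" "set_pmf \<mu> \<subseteq> A"
  shows "entropy_pmf \<mu> \<le> ln (card A)"
proof -
  have fin: "finite (set_pmf \<mu>)" using assms finite_subset by blast
  have cA: "card A > 0" using assms set_pmf_not_empty by (metis card_gt_0_iff subset_empty)
  have s1: "(\<Sum>x\<in>set_pmf \<mu>. pmf \<mu> x) = 1" using sum_pmf_eq_1[OF fin] by simp
  have pos: "\<And>x. x \<in> set_pmf \<mu> \<Longrightarrow> 0 < pmf \<mu> x" by (simp add: pmf_positive)
  have "entropy_pmf \<mu> - ln (card A) = (\<Sum>x\<in>set_pmf \<mu>. pmf \<mu> x * ln (1 / (pmf \<mu> x * card A)))"
  proof -
    have "(\<Sum>x\<in>set_pmf \<mu>. pmf \<mu> x * ln (1 / (pmf \<mu> x * card A)))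
        = (\<Sum>x\<in>set_pmf \<mu>. - (pmf \<mu> x * ln (pmf \<mu> x)) - pmf \<mu> x * ln (card A))"
      using pos cA by (intro sum.cong) (auto simp: ln_div ln_mult algebra_simps)
    also have "\<dots> = entropy_pmf \<mu> - ln (card A)"
      by (simp add: entropy_pmf_def sum_subtractf flip: sum_distrib_right add: s1)
    finally show ?thesis by simp
  qed
  also have "\<dots> \<le> (\<Sum>x\<in>set_pmf \<mu>. pmf \<mu> x * (1 / (pmf \<mu> x * card A) - 1))"
    using pos cA by (intro sum_mono mult_left_mono ln_le_minus_one) (auto intro: less_imp_le)
  also have "\<dots> = (\<Sum>x\<in>set_pmf \<mu>. 1 / card A - pmf \<mu> x)"
    using cA by (intro sum.cong) (auto simp: field_simps set_pmf_iff)
  also have "\<dots> = card (set_pmf \<mu>) / card A - 1"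
    by (simp add: sum_subtractf s1)
  also have "\<dots> \<le> 0"
    using cA card_mono[OF assms] by (simp add: divide_le_eq_1)
  finally show ?thesis by simp
qed

lemma hellinger_term_le_ln_ratio:
  fixes P Q :: real
  assumes "0 < P" "0 < Q"
  shows "2 * P - 2 * sqrt (P * Q) \<le> P * ln (P / Q)"
proof -
  define r where "r = sqrt (Q / P)"
  have r: "0 < r" using assms by (simp add: r_def)
  have "ln (P / Q) = - 2 * ln r"
    using assms by (simp add: r_def ln_sqrt ln_div)
  with ln_le_minus_one[OF r] have "2 - 2 * r \<le> ln (P / Q)" by simp
  then have "P * (2 - 2 * r) \<le> P * ln (P / Q)" using assms by (simp add: mult_left_mono)
  moreover have "P * r = sqrt (P * Q)"
    using assms by (simp add: r_def real_sqrt_divide real_sqrt_mult field_simps)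
  ultimately show ?thesis by (simp add: algebra_simps)
qed

lemma hellinger_le_KL_pmf:
  assumes fin: "finite (set_pmf Q)" and sub: "set_pmf P \<subseteq> set_pmf Q"
  shows "(\<Sum>x\<in>set_pmf Q. (sqrt (pmf P x) - sqrt (pmf Q x))\<^sup>2) \<le> KL_pmf P Q"
proof -
  have finP: "finite (set_pmf P)" using fin sub finite_subset by blast
  have sP: "(\<Sum>x\<in>set_pmf Q. pmf P x) = 1" using sum_pmf_eq_1[OF fin sub] .
  have sP': "(\<Sum>x\<in>set_pmf P. pmf P x) = 1" using sum_pmf_eq_1[OF finP] by simp
  have sQ: "(\<Sum>x\<in>set_pmf Q. pmf Q x) = 1" using sum_pmf_eq_1[OF fin] by simp
  have overlap: "(\<Sum>x\<in>set_pmf Q. sqrt (pmf P x * pmf Q x)) = (\<Sum>x\<in>set_pmf P. sqrt (pmf P x * pmf Q x))"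
    using fin sub by (intro sum.mono_neutral_right) (auto simp: set_pmf_eq)
  have "(\<Sum>x\<in>set_pmf Q. (sqrt (pmf P x) - sqrt (pmf Q x))\<^sup>2)
      = (\<Sum>x\<in>set_pmf Q. pmf P x + pmf Q x - 2 * sqrt (pmf P x * pmf Q x))"
    by (intro sum.cong) (auto simp: power2_diff real_sqrt_mult)
  also have "\<dots> = 2 - 2 * (\<Sum>x\<in>set_pmf P. sqrt (pmf P x * pmf Q x))"
    by (simp add: sum_subtractf sum.distrib sP sQ overlap flip: sum_distrib_left)
  also have "\<dots> = (\<Sum>x\<in>set_pmf P. 2 * pmf P x - 2 * sqrt (pmf P x * pmf Q x))"
    by (simp add: sum_subtractf sP' flip: sum_distrib_left)
  also have "\<dots> \<le> KL_pmf P Q"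
    unfolding KL_pmf_def
    using sub by (intro sum_mono hellinger_term_le_ln_ratio) (auto simp: pmf_positive)
  finally show ?thesis .
qed

lemma KL_pmf_nonneg:
  assumes "finite (set_pmf Q)" "set_pmf P \<subseteq> set_pmf Q"
  shows "0 \<le> KL_pmf P Q"
  using hellinger_le_KL_pmf[OF assms] by (meson order.trans sum_nonneg zero_le_power2)

text \<open>A Pinsker-type inequality, obtained from the Hellinger distance by Cauchy-Schwarz.\<close>

lemma sum_abs_pmf_diff_le_KL_pmf:
  assumes fin: "finite (set_pmf Q)" and sub: "set_pmf P \<subseteq> set_pmf Q"
  shows "(\<Sum>x\<in>set_pmf Q. \<bar>pmf P x - pmf Q x\<bar>) \<le> 2 * sqrt (KL_pmf P Q)"
proof -
  let ?F = "set_pmf Q"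
  let ?a = "\<lambda>x. \<bar>sqrt (pmf P x) - sqrt (pmf Q x)\<bar>"
  let ?b = "\<lambda>x. sqrt (pmf P x) + sqrt (pmf Q x)"
  have ab: "\<bar>pmf P x - pmf Q x\<bar> = ?a x * ?b x" for x
  proof -
    have "pmf P x - pmf Q x = (sqrt (pmf P x) - sqrt (pmf Q x)) * ?b x"
      by (simp add: algebra_simps)
    then show ?thesis by (simp add: abs_mult)
  qed
  have a2: "(\<Sum>x\<in>?F. (?a x)\<^sup>2) \<le> KL_pmf P Q"
    using hellinger_le_KL_pmf[OF fin sub] by simp
  have "(\<Sum>x\<in>?F. (?b x)\<^sup>2) \<le> (\<Sum>x\<in>?F. 2 * pmf P x + 2 * pmf Q x)"
  proof (rule sum_mono)
    fix x
    have "(?b x)\<^sup>2 \<le> 2 * (sqrt (pmf P x))\<^sup>2 + 2 * (sqrt (pmf Q x))\<^sup>2"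
      by (smt (verit, best) power2_sum zero_le_power2 power2_diff)
    then show "(?b x)\<^sup>2 \<le> 2 * pmf P x + 2 * pmf Q x" by simp
  qed
  also have "\<dots> = 4"
    using sum_pmf_eq_1[OF fin sub] sum_pmf_eq_1[OF fin] by (simp add: sum.distrib flip: sum_distrib_left)
  finally have b2: "(\<Sum>x\<in>?F. (?b x)\<^sup>2) \<le> 4" .
  have "(\<Sum>x\<in>?F. ?a x * ?b x)\<^sup>2 \<le> (\<Sum>x\<in>?F. (?a x)\<^sup>2) * (\<Sum>x\<in>?F. (?b x)\<^sup>2)"
    by (rule Cauchy_Schwarz_ineq_sum)
  also have "\<dots> \<le> KL_pmf P Q * 4"
    using a2 b2 by (intro mult_mono) (auto intro: sum_nonneg KL_pmf_nonneg[OF fin sub])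
  finally have "(\<Sum>x\<in>?F. ?a x * ?b x) \<le> sqrt (KL_pmf P Q * 4)"
    by (rule real_le_rsqrt)
  then show ?thesis using ab by (simp add: real_sqrt_mult)
qed

lemma abs_expectation_diff_le_KL_pmf:
  assumes fin: "finite (set_pmf Q)" and sub: "set_pmf P \<subseteq> set_pmf Q"
    and h0: "\<And>x. 0 \<le> h x" and h1: "\<And>x. h x \<le> 1"
  shows "\<bar>measure_pmf.expectation P h - measure_pmf.expectation Q h\<bar> \<le> sqrt (KL_pmf P Q)"
proof -
  let ?F = "set_pmf Q"
  have EP: "measure_pmf.expectation P h = (\<Sum>x\<in>?F. pmf P x * h x)"
    using integral_measure_pmf_real[OF fin, of P h] sub by (auto simp: mult.commute)
  have EQ: "measure_pmf.expectation Q h = (\<Sum>x\<in>?F. pmf Q x * h x)"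
    using expectation_pmf_finite[OF fin] by simp
  have "(\<Sum>x\<in>?F. pmf P x * h x) - (\<Sum>x\<in>?F. pmf Q x * h x)
      = (\<Sum>x\<in>?F. (pmf P x - pmf Q x) * (h x - 1/2)) + (1/2) * ((\<Sum>x\<in>?F. pmf P x) - (\<Sum>x\<in>?F. pmf Q x))"
    by (simp add: algebra_simps sum_subtractf sum.distrib sum_distrib_left sum_divide_distrib)
  also have "\<dots> = (\<Sum>x\<in>?F. (pmf P x - pmf Q x) * (h x - 1/2))"
    using sum_pmf_eq_1[OF fin sub] sum_pmf_eq_1[OF fin] by simp
  finally have "\<bar>measure_pmf.expectation P h - measure_pmf.expectation Q h\<bar>
      = \<bar>\<Sum>x\<in>?F. (pmf P x - pmf Q x) * (h x - 1/2)\<bar>"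
    using EP EQ by simp
  also have "\<dots> \<le> (\<Sum>x\<in>?F. \<bar>pmf P x - pmf Q x\<bar> * (1/2))"
  proof (rule order.trans[OF sum_abs sum_mono])
    fix x
    have "\<bar>h x - 1/2\<bar> \<le> 1/2" using h0[of x] h1[of x] by linarith
    then show "\<bar>(pmf P x - pmf Q x) * (h x - 1/2)\<bar> \<le> \<bar>pmf P x - pmf Q x\<bar> * (1/2)"
      unfolding abs_mult by (intro mult_left_mono) auto
  qed
  also have "\<dots> \<le> sqrt (KL_pmf P Q)"
    using sum_abs_pmf_diff_le_KL_pmf[OF fin sub] by (simp add: sum_divide_distrib[symmetric])
  finally show ?thesis .
qed

lemma pmf_bind_pmf_Pair:
  "pmf (bind_pmf M (\<lambda>c. map_pmf (Pair c) (K c))) (a, b) = pmf M a * pmf (K a) b"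
proof -
  have fiber: "pmf (map_pmf (Pair c) (K c)) (a, b) = (if c = a then pmf (K a) b else 0)" for c
    by (cases "c = a") (auto simp: pmf_map_inj' inj_on_def intro: pmf_map_outside)
  have "pmf (bind_pmf M (\<lambda>c. map_pmf (Pair c) (K c))) (a, b)
      = measure_pmf.expectation M (\<lambda>c. if c = a then pmf (K a) b else 0)"
    by (simp add: pmf_bind fiber)
  also have "\<dots> = (\<Sum>c\<in>{a}. (if c = a then pmf (K a) b else 0) * pmf M c)"
    by (rule integral_measure_pmf_real) (auto split: if_splits)
  finally show ?thesis by simp
qed

lemma set_bind_pmf_Pair:
  "set_pmf (bind_pmf M (\<lambda>c. map_pmf (Pair c) (K c))) = Sigma (set_pmf M) (\<lambda>c. set_pmf (K c))"
  by (auto simp: set_bind_pmf)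

lemma entropy_pmf_bind_Pair:
  assumes fin: "finite (set_pmf M)" and finK: "\<And>c. c \<in> set_pmf M \<Longrightarrow> finite (set_pmf (K c))"
  shows "entropy_pmf (bind_pmf M (\<lambda>c. map_pmf (Pair c) (K c)))
       = entropy_pmf M + (\<Sum>c\<in>set_pmf M. pmf M c * entropy_pmf (K c))"
proof -
  let ?B = "bind_pmf M (\<lambda>c. map_pmf (Pair c) (K c))"
  have "entropy_pmf ?B = (\<Sum>z\<in>Sigma (set_pmf M) (\<lambda>c. set_pmf (K c)). - (pmf ?B z * ln (pmf ?B z)))"
    unfolding entropy_pmf_def set_bind_pmf_Pair ..
  also have "\<dots> = (\<Sum>c\<in>set_pmf M. \<Sum>x\<in>set_pmf (K c).
                     - (pmf M c * pmf (K c) x * ln (pmf M c * pmf (K c) x)))"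
    by (subst sum.Sigma[OF fin]) (auto simp: finK pmf_bind_pmf_Pair split_def intro!: sum.cong)
  also have "\<dots> = (\<Sum>c\<in>set_pmf M. - (pmf M c * ln (pmf M c)) + pmf M c * entropy_pmf (K c))"
  proof (rule sum.cong[OF refl])
    fix c assume c: "c \<in> set_pmf M"
    have "(\<Sum>x\<in>set_pmf (K c). - (pmf M c * pmf (K c) x * ln (pmf M c * pmf (K c) x)))
        = (\<Sum>x\<in>set_pmf (K c). pmf (K c) x * (- (pmf M c * ln (pmf M c)))
                              + pmf M c * (- (pmf (K c) x * ln (pmf (K c) x))))"
      using c by (intro sum.cong refl) (simp add: ln_mult pmf_positive algebra_simps)
    also have "\<dots> = (\<Sum>x\<in>set_pmf (K c). pmf (K c) x) * (- (pmf M c * ln (pmf M c)))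
                    + pmf M c * entropy_pmf (K c)"
      unfolding sum.distrib entropy_pmf_def sum_distrib_left[symmetric] sum_distrib_right[symmetric] ..
    finally show "(\<Sum>x\<in>set_pmf (K c). - (pmf M c * pmf (K c) x * ln (pmf M c * pmf (K c) x)))
        = - (pmf M c * ln (pmf M c)) + pmf M c * entropy_pmf (K c)"
      using sum_pmf_eq_1[OF finK[OF c]] by simp
  qed
  also have "\<dots> = entropy_pmf M + (\<Sum>c\<in>set_pmf M. pmf M c * entropy_pmf (K c))"
    unfolding sum.distrib entropy_pmf_def ..
  finally show ?thesis .
qed

definition cond_value_pmf :: "'w pmf \<Rightarrow> ('w \<Rightarrow> 'g) \<Rightarrow> 'g \<Rightarrow> 'w pmf" where
  "cond_value_pmf \<mu> W \<gamma> = cond_pmf \<mu> {\<omega>. W \<omega> = \<gamma>}"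

lemma cond_value_pmf_event_nonempty:
  "\<gamma> \<in> set_pmf (map_pmf W \<mu>) \<Longrightarrow> set_pmf \<mu> \<inter> {\<omega>. W \<omega> = \<gamma>} \<noteq> {}"
  by auto

lemma set_cond_value_pmf:
  "\<gamma> \<in> set_pmf (map_pmf W \<mu>) \<Longrightarrow> set_pmf (cond_value_pmf \<mu> W \<gamma>) = set_pmf \<mu> \<inter> {\<omega>. W \<omega> = \<gamma>}"
  unfolding cond_value_pmf_def by (rule set_cond_pmf[OF cond_value_pmf_event_nonempty])

lemma finite_set_cond_value_pmf:
  "finite (set_pmf \<mu>) \<Longrightarrow> \<gamma> \<in> set_pmf (map_pmf W \<mu>) \<Longrightarrow> finite (set_pmf (cond_value_pmf \<mu> W \<gamma>))"
  by (simp add: set_cond_value_pmf)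

lemma measure_cond_value_pmf:
  assumes "\<gamma> \<in> set_pmf (map_pmf W \<mu>)"
  shows "measure_pmf.prob (cond_value_pmf \<mu> W \<gamma>) E
       = measure_pmf.prob \<mu> (E \<inter> {\<omega>. W \<omega> = \<gamma>}) / measure_pmf.prob \<mu> {\<omega>. W \<omega> = \<gamma>}"
proof -
  have ne: "set_pmf \<mu> \<inter> {\<omega>. W \<omega> = \<gamma>} \<noteq> {}"
    using assms by (rule cond_value_pmf_event_nonempty)
  show ?thesis
    unfolding cond_value_pmf_def cond_pmf.rep_eq[OF ne]
    using emeasure_measure_pmf_not_zero[OF ne] by (simp add: Int_commute measure_pmf.emeasure_finite)
qed

lemma bind_cond_value_pmf: "bind_pmf (map_pmf W \<mu>) (cond_value_pmf \<mu> W) = \<mu>"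
  unfolding cond_value_pmf_def
proof (rule bind_cond_pmf_cancel)
  fix x y assume "x \<in> set_pmf (map_pmf W \<mu>)" "y \<in> set_pmf \<mu>" "W y = x"
  then show "measure_pmf.prob \<mu> {y. W y = x} = measure_pmf.prob (map_pmf W \<mu>) {x. W y = x}"
    by (simp add: vimage_def)
qed auto

lemma map_pmf_pair_eq_bind_cond_value_pmf:
  "map_pmf (\<lambda>\<omega>. (W \<omega>, F \<omega>)) \<mu>
     = bind_pmf (map_pmf W \<mu>) (\<lambda>\<gamma>. map_pmf (Pair \<gamma>) (map_pmf F (cond_value_pmf \<mu> W \<gamma>)))"
proof -
  have "map_pmf (\<lambda>\<omega>. (W \<omega>, F \<omega>)) \<mu>
      = bind_pmf (map_pmf W \<mu>) (\<lambda>\<gamma>. map_pmf (\<lambda>\<omega>. (W \<omega>, F \<omega>)) (cond_value_pmf \<mu> W \<gamma>))"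
    by (subst (1) bind_cond_value_pmf[of W \<mu>, symmetric]) (simp add: map_bind_pmf)
  also have "\<dots> = bind_pmf (map_pmf W \<mu>) (\<lambda>\<gamma>. map_pmf (Pair \<gamma>) (map_pmf F (cond_value_pmf \<mu> W \<gamma>)))"
  proof (rule bind_pmf_cong[OF refl])
    fix \<gamma> assume "\<gamma> \<in> set_pmf (map_pmf W \<mu>)"
    then show "map_pmf (\<lambda>\<omega>. (W \<omega>, F \<omega>)) (cond_value_pmf \<mu> W \<gamma>)
             = map_pmf (Pair \<gamma>) (map_pmf F (cond_value_pmf \<mu> W \<gamma>))"
      unfolding map_pmf_comp by (intro map_pmf_cong) (auto simp: set_cond_value_pmf)
  qed
  finally show ?thesis .
qed

lemma entropy_pmf_chain_rule:
  assumes fin: "finite (set_pmf \<mu>)"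
  shows "entropy_pmf (map_pmf (\<lambda>\<omega>. (W \<omega>, F \<omega>)) \<mu>) = entropy_pmf (map_pmf W \<mu>) +
     (\<Sum>\<gamma>\<in>set_pmf (map_pmf W \<mu>). pmf (map_pmf W \<mu>) \<gamma> * entropy_pmf (map_pmf F (cond_value_pmf \<mu> W \<gamma>)))"
  unfolding map_pmf_pair_eq_bind_cond_value_pmf[of W F \<mu>]
  using fin by (intro entropy_pmf_bind_Pair) (auto simp: finite_set_cond_value_pmf)

lemma cond_entropy_pmf_nonneg:
  assumes "finite (set_pmf \<mu>)"
  shows "0 \<le> cond_entropy_pmf \<mu> Y G"
  unfolding cond_entropy_pmf_def entropy_pmf_chain_rule[OF assms]
  by (simp add: sum_nonneg entropy_pmf_nonneg)

lemma KL_pmf_pair_marginals: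
  assumes fin: "finite (set_pmf \<nu>)"
  shows "KL_pmf \<nu> (pair_pmf (map_pmf fst \<nu>) (map_pmf snd \<nu>)) = mutual_info_pmf \<nu> fst snd"
proof -
  let ?A = "map_pmf fst \<nu>" and ?B = "map_pmf snd \<nu>"
  have "KL_pmf \<nu> (pair_pmf ?A ?B) = (\<Sum>z\<in>set_pmf \<nu>. pmf \<nu> z * ln (pmf \<nu> z)
          - pmf \<nu> z * ln (pmf ?A (fst z)) - pmf \<nu> z * ln (pmf ?B (snd z)))"
    unfolding KL_pmf_def
  proof (rule sum.cong[OF refl])
    fix z assume z: "z \<in> set_pmf \<nu>"
    then have "0 < pmf \<nu> z" "0 < pmf ?A (fst z)" "0 < pmf ?B (snd z)"
      by (simp_all add: pmf_positive)
    then show "pmf \<nu> z * ln (pmf \<nu> z / pmf (pair_pmf ?A ?B) z) = pmf \<nu> z * ln (pmf \<nu> z)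
          - pmf \<nu> z * ln (pmf ?A (fst z)) - pmf \<nu> z * ln (pmf ?B (snd z))"
      by (cases z) (simp add: pmf_pair ln_div ln_mult algebra_simps)
  qed
  also have "\<dots> = (\<Sum>z\<in>set_pmf \<nu>. pmf \<nu> z * ln (pmf \<nu> z))
      - (\<Sum>z\<in>set_pmf \<nu>. pmf \<nu> z * ln (pmf ?A (fst z))) - (\<Sum>z\<in>set_pmf \<nu>. pmf \<nu> z * ln (pmf ?B (snd z)))"
    by (simp add: sum_subtractf)
  also have "(\<Sum>z\<in>set_pmf \<nu>. pmf \<nu> z * ln (pmf ?A (fst z))) = - entropy_pmf ?A"
    unfolding sum_pmf_map_pmf[OF fin, of "\<lambda>a. ln (pmf ?A a)" fst] by (simp add: entropy_pmf_def sum_negf)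
  also have "(\<Sum>z\<in>set_pmf \<nu>. pmf \<nu> z * ln (pmf ?B (snd z))) = - entropy_pmf ?B"
    unfolding sum_pmf_map_pmf[OF fin, of "\<lambda>a. ln (pmf ?B a)" snd] by (simp add: entropy_pmf_def sum_negf)
  also have "(\<Sum>z\<in>set_pmf \<nu>. pmf \<nu> z * ln (pmf \<nu> z)) = - entropy_pmf \<nu>"
    by (simp add: entropy_pmf_def sum_negf)
  finally show ?thesis by (simp add: mutual_info_pmf_def)
qed

lemma mutual_info_pmf_eq_map:
  "mutual_info_pmf \<mu> A B = mutual_info_pmf (map_pmf (\<lambda>\<omega>. (A \<omega>, B \<omega>)) \<mu>) fst snd"
  by (simp add: mutual_info_pmf_def map_pmf_comp)

lemma mutual_info_pmf_nonneg:
  assumes fin: "finite (set_pmf \<mu>)"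
  shows "0 \<le> mutual_info_pmf \<mu> A B"
proof -
  let ?\<nu> = "map_pmf (\<lambda>\<omega>. (A \<omega>, B \<omega>)) \<mu>"
  have "0 \<le> KL_pmf ?\<nu> (pair_pmf (map_pmf fst ?\<nu>) (map_pmf snd ?\<nu>))"
    by (rule KL_pmf_nonneg) (use fin in \<open>force simp: set_pair_pmf\<close>)+
  then show ?thesis
    using fin by (simp add: KL_pmf_pair_marginals flip: mutual_info_pmf_eq_map)
qed

lemma entropy_pmf_pair_le:
  "finite (set_pmf \<mu>) \<Longrightarrow>
   entropy_pmf (map_pmf (\<lambda>\<omega>. (A \<omega>, B \<omega>)) \<mu>) \<le> entropy_pmf (map_pmf A \<mu>) + entropy_pmf (map_pmf B \<mu>)"
  using mutual_info_pmf_nonneg[of \<mu> A B] by (simp add: mutual_info_pmf_def)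

lemma entropy_pmf_submodular:
  assumes fin: "finite (set_pmf \<mu>)"
  shows "entropy_pmf (map_pmf (\<lambda>\<omega>. (W \<omega>, A \<omega>, B \<omega>)) \<mu>) + entropy_pmf (map_pmf W \<mu>)
     \<le> entropy_pmf (map_pmf (\<lambda>\<omega>. (W \<omega>, A \<omega>)) \<mu>) + entropy_pmf (map_pmf (\<lambda>\<omega>. (W \<omega>, B \<omega>)) \<mu>)"
proof -
  let ?P = "map_pmf W \<mu>" and ?c = "cond_value_pmf \<mu> W"
  have "(\<Sum>\<gamma>\<in>set_pmf ?P. pmf ?P \<gamma> * entropy_pmf (map_pmf (\<lambda>\<omega>. (A \<omega>, B \<omega>)) (?c \<gamma>)))
     \<le> (\<Sum>\<gamma>\<in>set_pmf ?P. pmf ?P \<gamma> * entropy_pmf (map_pmf A (?c \<gamma>))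
                          + pmf ?P \<gamma> * entropy_pmf (map_pmf B (?c \<gamma>)))"
    using fin by (intro sum_mono) (auto simp flip: distrib_left
        intro!: mult_left_mono entropy_pmf_pair_le finite_set_cond_value_pmf)
  then show ?thesis
    unfolding entropy_pmf_chain_rule[OF fin, of W "\<lambda>\<omega>. (A \<omega>, B \<omega>)"]
      entropy_pmf_chain_rule[OF fin, of W A] entropy_pmf_chain_rule[OF fin, of W B]
    by (simp add: sum.distrib)
qed

lemma cond_entropy_pmf_le_coarser:
  assumes fin: "finite (set_pmf \<mu>)"
  shows "cond_entropy_pmf \<mu> Y G \<le> cond_entropy_pmf \<mu> Y (\<lambda>\<omega>. \<phi> (G \<omega>))"
proof -
  have "entropy_pmf (map_pmf (\<lambda>\<omega>. (\<phi> (G \<omega>), Y \<omega>, G \<omega>)) \<mu>) + entropy_pmf (map_pmf (\<lambda>\<omega>. \<phi> (G \<omega>)) \<mu>)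
     \<le> entropy_pmf (map_pmf (\<lambda>\<omega>. (\<phi> (G \<omega>), Y \<omega>)) \<mu>) + entropy_pmf (map_pmf (\<lambda>\<omega>. (\<phi> (G \<omega>), G \<omega>)) \<mu>)"
    by (rule entropy_pmf_submodular[OF fin])
  moreover have "entropy_pmf (map_pmf (\<lambda>\<omega>. (\<phi> (G \<omega>), Y \<omega>, G \<omega>)) \<mu>) = entropy_pmf (map_pmf (\<lambda>\<omega>. (G \<omega>, Y \<omega>)) \<mu>)"
    by (rule entropy_pmf_map_cong_inj[where h = "\<lambda>(g, y). (\<phi> g, y, g)"]) (auto simp: inj_on_def)
  moreover have "entropy_pmf (map_pmf (\<lambda>\<omega>. (\<phi> (G \<omega>), G \<omega>)) \<mu>) = entropy_pmf (map_pmf G \<mu>)"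
    by (rule entropy_pmf_map_cong_inj[where h = "\<lambda>g. (\<phi> g, g)"]) (auto simp: inj_on_def)
  ultimately show ?thesis unfolding cond_entropy_pmf_def by simp
qed

section \<open>Total variation distance\<close>

lemma measure_pmf_eq_sum_superset:
  assumes "finite F" "set_pmf u \<subseteq> F"
  shows "measure_pmf.prob u B = (\<Sum>x\<in>B \<inter> F. pmf u x)"
proof -
  have "measure_pmf.prob u B = measure_pmf.prob u (B \<inter> set_pmf u)" by (simp add: measure_Int_set_pmf)
  also have "\<dots> = (\<Sum>x\<in>B \<inter> set_pmf u. pmf u x)"
    using finite_subset[OF assms(2,1)] by (simp add: measure_measure_pmf_finite)
  also have "\<dots> = (\<Sum>x\<in>B \<inter> F. pmf u x)"
    using assms by (intro sum.mono_neutral_left) (auto simp: set_pmf_eq)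
  finally show ?thesis .
qed

lemma expectation_bind_pmf_finite:
  fixes h :: "'b \<Rightarrow> real"
  assumes "finite (set_pmf p)" "\<And>x. x \<in> set_pmf p \<Longrightarrow> finite (set_pmf (f x))"
  shows "measure_pmf.expectation (bind_pmf p f) h
       = measure_pmf.expectation p (\<lambda>a. measure_pmf.expectation (f a) h)"
  using pmf_expectation_bind[OF assms(1) assms(2) subset_refl, where h=h]
    expectation_pmf_finite[OF assms(1)] by simp

lemma measure_bind_pmf:
  "measure_pmf.prob (bind_pmf M f) X = measure_pmf.expectation M (\<lambda>x. measure_pmf.prob (f x) X)"
  unfolding measure_pmf_bind
  by (rule measure_pmf.measure_bind[where N = "count_space UNIV"])
     (auto simp: space_subprob_algebra measure_pmf.subprob_space_axioms
        intro!: measurable_count_space_eq1[THEN iffD2])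

lemma expectation_pmf_unit_interval:
  fixes g :: "'a \<Rightarrow> real"
  assumes "finite (set_pmf M)" "\<And>x. 0 \<le> g x" "\<And>x. g x \<le> 1"
  shows "0 \<le> measure_pmf.expectation M g" "measure_pmf.expectation M g \<le> 1"
proof -
  show "0 \<le> measure_pmf.expectation M g"
    unfolding expectation_pmf_finite[OF assms(1)] using assms(2) by (intro sum_nonneg) auto
  have "(\<Sum>x\<in>set_pmf M. pmf M x * g x) \<le> (\<Sum>x\<in>set_pmf M. pmf M x)"
    using assms(3) by (intro sum_mono) (simp add: mult_left_le)
  then show "measure_pmf.expectation M g \<le> 1"
    unfolding expectation_pmf_finite[OF assms(1)] using sum_pmf_eq_1[OF assms(1)] by simp
qed

lemma bdd_above_measure_pmf_diff:
  "bdd_above (range (\<lambda>A. \<bar>measure_pmf.prob p A - measure_pmf.prob q A\<bar>))"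
proof (rule bdd_aboveI2)
  fix A
  have "measure_pmf.prob p A \<le> 1" "measure_pmf.prob q A \<le> 1"
    "0 \<le> measure_pmf.prob p A" "0 \<le> measure_pmf.prob q A"
    by auto
  then show "\<bar>measure_pmf.prob p A - measure_pmf.prob q A\<bar> \<le> 1" by linarith
qed

lemma measure_pmf_diff_le_tv_dist: "\<bar>measure_pmf.prob p A - measure_pmf.prob q A\<bar> \<le> tv_dist p q"
  unfolding tv_dist_def by (rule cSUP_upper[OF _ bdd_above_measure_pmf_diff]) simp

lemma tv_dist_le: "(\<And>A. \<bar>measure_pmf.prob p A - measure_pmf.prob q A\<bar> \<le> c) \<Longrightarrow> tv_dist p q \<le> c"
  unfolding tv_dist_def by (rule cSUP_least) auto

lemma tv_dist_nonneg: "0 \<le> tv_dist p q"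
  using measure_pmf_diff_le_tv_dist[of p "{}" q] by simp

lemma tv_dist_triangle: "tv_dist p r \<le> tv_dist p q + tv_dist q r"
proof (rule tv_dist_le)
  fix A
  show "\<bar>measure_pmf.prob p A - measure_pmf.prob r A\<bar> \<le> tv_dist p q + tv_dist q r"
    using measure_pmf_diff_le_tv_dist[of p A q] measure_pmf_diff_le_tv_dist[of q A r] by linarith
qed

lemma expectation_diff_le_tv_dist:
  fixes g :: "'a \<Rightarrow> real"
  assumes fq: "finite (set_pmf q)" and fr: "finite (set_pmf r)"
    and g0: "\<And>x. 0 \<le> g x" and g1: "\<And>x. g x \<le> 1"
  shows "measure_pmf.expectation q g - measure_pmf.expectation r g \<le> tv_dist q r"
proof -
  let ?F = "set_pmf q \<union> set_pmf r"
  let ?A = "{x\<in>?F. pmf r x < pmf q x}"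
  have fF: "finite ?F" using fq fr by simp
  have "measure_pmf.expectation q g - measure_pmf.expectation r g
      = (\<Sum>x\<in>?F. g x * pmf q x) - (\<Sum>x\<in>?F. g x * pmf r x)"
    by (subst (1 2) integral_measure_pmf_real[OF fF]) auto
  also have "\<dots> = (\<Sum>x\<in>?F. (pmf q x - pmf r x) * g x)"
    by (simp add: sum_subtractf algebra_simps)
  also have "\<dots> \<le> (\<Sum>x\<in>?F. if pmf r x < pmf q x then pmf q x - pmf r x else 0)"
    using g0 g1 by (intro sum_mono) (auto simp: mult_left_le mult_nonpos_nonneg)
  also have "\<dots> = (\<Sum>x\<in>?A. pmf q x - pmf r x)"
    by (rule sum.inter_filter[OF fF, symmetric])
  also have "\<dots> = measure_pmf.prob q ?A - measure_pmf.prob r ?A"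
    using fF by (simp add: sum_subtractf measure_measure_pmf_finite)
  also have "\<dots> \<le> tv_dist q r" using measure_pmf_diff_le_tv_dist[of q ?A r] by linarith
  finally show ?thesis .
qed

lemma replicate_pmf_Suc_bind:
  "replicate_pmf (Suc n) q = bind_pmf q (\<lambda>x. map_pmf (Cons x) (replicate_pmf n q))"
  by (simp add: map_pmf_def)

lemma finite_set_replicate_pmf: "finite (set_pmf q) \<Longrightarrow> finite (set_pmf (replicate_pmf n q))"
  unfolding set_replicate_pmf
  by (rule finite_subset[OF _ finite_lists_length_eq[of "set_pmf q" n]]) auto

text \<open>The hybrid argument: replace the factors of the product one at a time.\<close>

lemma expectation_replicate_pmf_diff_le:
  fixes g :: "'a list \<Rightarrow> real"
  assumes fq: "finite (set_pmf q)" and fr: "finite (set_pmf r)"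
    and g0: "\<And>x. 0 \<le> g x" and g1: "\<And>x. g x \<le> 1"
  shows "measure_pmf.expectation (replicate_pmf n q) g - measure_pmf.expectation (replicate_pmf n r) g
       \<le> n * tv_dist q r"
  using g0 g1
proof (induction n arbitrary: g)
  case 0
  then show ?case by simp
next
  case (Suc n)
  define \<phi> where "\<phi> s x = measure_pmf.expectation (replicate_pmf n s) (\<lambda>xs. g (x # xs))" for s x
  have E: "measure_pmf.expectation (replicate_pmf (Suc n) s) g = measure_pmf.expectation s (\<phi> s)"
    if "finite (set_pmf s)" for s
    unfolding replicate_pmf_Suc_bind \<phi>_def
    by (subst expectation_bind_pmf_finite) (use that finite_set_replicate_pmf in auto)
  have \<phi>_bounds: "0 \<le> \<phi> s x" "\<phi> s x \<le> 1" if "finite (set_pmf s)" for s x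
    unfolding \<phi>_def using Suc.prems
    by (auto intro!: expectation_pmf_unit_interval finite_set_replicate_pmf[OF that])
  have first: "measure_pmf.expectation q (\<phi> q) - measure_pmf.expectation r (\<phi> q) \<le> tv_dist q r"
    by (rule expectation_diff_le_tv_dist[OF fq fr]) (use \<phi>_bounds[OF fq] in auto)
  have rest: "measure_pmf.expectation r (\<phi> q) - measure_pmf.expectation r (\<phi> r) \<le> n * tv_dist q r"
  proof -
    have pointwise: "\<phi> q x - \<phi> r x \<le> n * tv_dist q r" for x
      unfolding \<phi>_def by (rule Suc.IH) (use Suc.prems in auto)
    have "measure_pmf.expectation r (\<phi> q) - measure_pmf.expectation r (\<phi> r)
        = (\<Sum>x\<in>set_pmf r. pmf r x * (\<phi> q x - \<phi> r x))"
      unfolding expectation_pmf_finite[OF fr] by (simp add: sum_subtractf algebra_simps)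
    also have "\<dots> \<le> (\<Sum>x\<in>set_pmf r. pmf r x * (n * tv_dist q r))"
      by (intro sum_mono mult_left_mono pointwise) auto
    also have "\<dots> = n * tv_dist q r"
      using sum_pmf_eq_1[OF fr] by (simp add: sum_distrib_right[symmetric])
    finally show ?thesis .
  qed
  show ?case using E[OF fq] E[OF fr] first rest by (simp add: algebra_simps)
qed

definition mix_pmf :: "real \<Rightarrow> 'a pmf \<Rightarrow> 'a pmf \<Rightarrow> 'a pmf" where
  "mix_pmf \<theta> q p = bind_pmf (bernoulli_pmf \<theta>) (\<lambda>b. if b then q else p)"

lemma set_mix_pmf: "set_pmf (mix_pmf \<theta> q p) \<subseteq> set_pmf q \<union> set_pmf p"
  unfolding mix_pmf_def by (auto simp: set_bind_pmf split: if_splits)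

lemma measure_mix_pmf:
  assumes "0 \<le> \<theta>" "\<theta> \<le> 1" "finite (set_pmf q)" "finite (set_pmf p)"
  shows "measure_pmf.prob (mix_pmf \<theta> q p) A = \<theta> * measure_pmf.prob q A + (1 - \<theta>) * measure_pmf.prob p A"
proof -
  have "measure_pmf.prob (mix_pmf \<theta> q p) A = measure_pmf.expectation (mix_pmf \<theta> q p) (indicator A)"
    by simp
  also have "\<dots> = (\<Sum>b\<in>UNIV. pmf (bernoulli_pmf \<theta>) b *\<^sub>R
                      measure_pmf.expectation (if b then q else p) (indicator A))"
    unfolding mix_pmf_def by (rule pmf_expectation_bind) (use assms in auto)
  also have "\<dots> = \<theta> * measure_pmf.prob q A + (1 - \<theta>) * measure_pmf.prob p A"
    using assms by (simp add: UNIV_bool pmf_bernoulli_True pmf_bernoulli_False)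
  finally show ?thesis .
qed

lemma tv_dist_mix_pmf_left:
  assumes "0 \<le> \<theta>" "\<theta> \<le> 1" "finite (set_pmf q)" "finite (set_pmf p)"
  shows "tv_dist p (mix_pmf \<theta> q p) \<le> \<theta> * tv_dist p q"
proof (rule tv_dist_le)
  fix A
  have "measure_pmf.prob p A - measure_pmf.prob (mix_pmf \<theta> q p) A
      = \<theta> * (measure_pmf.prob p A - measure_pmf.prob q A)"
    using assms by (simp add: measure_mix_pmf algebra_simps)
  then have "\<bar>measure_pmf.prob p A - measure_pmf.prob (mix_pmf \<theta> q p) A\<bar>
      = \<theta> * \<bar>measure_pmf.prob p A - measure_pmf.prob q A\<bar>"
    using assms by (simp add: abs_mult)
  also have "\<dots> \<le> \<theta> * tv_dist p q"
    using assms measure_pmf_diff_le_tv_dist by (intro mult_left_mono) auto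
  finally show "\<bar>measure_pmf.prob p A - measure_pmf.prob (mix_pmf \<theta> q p) A\<bar> \<le> \<theta> * tv_dist p q" .
qed

lemma tv_dist_mix_pmf_right:
  assumes "0 \<le> \<theta>" "\<theta> \<le> 1" "finite (set_pmf q)" "finite (set_pmf p)"
  shows "tv_dist (mix_pmf \<theta> q p) q \<le> (1 - \<theta>) * tv_dist p q"
proof (rule tv_dist_le)
  fix A
  have "measure_pmf.prob (mix_pmf \<theta> q p) A - measure_pmf.prob q A
      = (1 - \<theta>) * (measure_pmf.prob p A - measure_pmf.prob q A)"
    using assms by (simp add: measure_mix_pmf algebra_simps)
  then have "\<bar>measure_pmf.prob (mix_pmf \<theta> q p) A - measure_pmf.prob q A\<bar>
      = (1 - \<theta>) * \<bar>measure_pmf.prob p A - measure_pmf.prob q A\<bar>"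
    using assms by (simp add: abs_mult)
  also have "\<dots> \<le> (1 - \<theta>) * tv_dist p q"
    using assms measure_pmf_diff_le_tv_dist by (intro mult_left_mono) auto
  finally show "\<bar>measure_pmf.prob (mix_pmf \<theta> q p) A - measure_pmf.prob q A\<bar> \<le> (1 - \<theta>) * tv_dist p q" .
qed

lemma tv_dist_map_pmf_le:
  "tv_dist (map_pmf f c) (map_pmf g c) \<le> measure_pmf.prob c {\<omega>. f \<omega> \<noteq> g \<omega>}"
proof (rule tv_dist_le)
  fix A
  have "measure_pmf.prob c (f -` A) \<le> measure_pmf.prob c (g -` A \<union> {\<omega>. f \<omega> \<noteq> g \<omega>})"
    by (rule measure_pmf.finite_measure_mono) auto
  also have "\<dots> \<le> measure_pmf.prob c (g -` A) + measure_pmf.prob c {\<omega>. f \<omega> \<noteq> g \<omega>}"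
    by (rule measure_Un_le) auto
  finally have 1: "measure_pmf.prob c (f -` A) \<le> \<dots>" .
  have "measure_pmf.prob c (g -` A) \<le> measure_pmf.prob c (f -` A \<union> {\<omega>. f \<omega> \<noteq> g \<omega>})"
    by (rule measure_pmf.finite_measure_mono) auto
  also have "\<dots> \<le> measure_pmf.prob c (f -` A) + measure_pmf.prob c {\<omega>. f \<omega> \<noteq> g \<omega>}"
    by (rule measure_Un_le) auto
  finally have 2: "measure_pmf.prob c (g -` A) \<le> \<dots>" .
  show "\<bar>measure_pmf.prob (map_pmf f c) A - measure_pmf.prob (map_pmf g c) A\<bar>
      \<le> measure_pmf.prob c {\<omega>. f \<omega> \<noteq> g \<omega>}"
    using 1 2 by simp
qed

lemma tv_dist_le_excess:
  assumes fp: "finite (set_pmf p)" and fu: "finite (set_pmf u)"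
  shows "tv_dist p u \<le> measure_pmf.prob u {x. pmf p x < pmf u x} - measure_pmf.prob p {x. pmf p x < pmf u x}"
proof -
  let ?F = "set_pmf p \<union> set_pmf u"
  let ?A = "{x. pmf p x < pmf u x}"
  have fF: "finite ?F" using fp fu by simp
  have excess: "measure_pmf.prob u B - measure_pmf.prob p B \<le> measure_pmf.prob u ?A - measure_pmf.prob p ?A"
    for B
  proof -
    have "measure_pmf.prob u B - measure_pmf.prob p B = (\<Sum>x\<in>B \<inter> ?F. pmf u x - pmf p x)"
      using measure_pmf_eq_sum_superset[OF fF, of u B] measure_pmf_eq_sum_superset[OF fF, of p B]
      by (simp add: sum_subtractf)
    also have "\<dots> \<le> (\<Sum>x\<in>B \<inter> ?F. if pmf p x < pmf u x then pmf u x - pmf p x else 0)"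
      by (intro sum_mono) auto
    also have "\<dots> \<le> (\<Sum>x\<in>?F. if pmf p x < pmf u x then pmf u x - pmf p x else 0)"
      using fF by (intro sum_mono2) auto
    also have "\<dots> = (\<Sum>x\<in>?A \<inter> ?F. pmf u x - pmf p x)"
      using sum.inter_filter[OF fF, of "\<lambda>x. pmf u x - pmf p x" "\<lambda>x. pmf p x < pmf u x"]
      by (simp add: Int_def conj_commute)
    also have "\<dots> = measure_pmf.prob u ?A - measure_pmf.prob p ?A"
      using measure_pmf_eq_sum_superset[OF fF, of u ?A] measure_pmf_eq_sum_superset[OF fF, of p ?A]
      by (simp add: sum_subtractf)
    finally show ?thesis .
  qed
  show ?thesis
  proof (rule tv_dist_le)
    fix B
    have "measure_pmf.prob p B - measure_pmf.prob u B = measure_pmf.prob u (- B) - measure_pmf.prob p (- B)"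
      using measure_pmf.prob_compl[of B p] measure_pmf.prob_compl[of B u]
      by (simp add: Compl_eq_Diff_UNIV)
    then show "\<bar>measure_pmf.prob p B - measure_pmf.prob u B\<bar>
        \<le> measure_pmf.prob u ?A - measure_pmf.prob p ?A"
      using excess[of B] excess[of "- B"] by linarith
  qed
qed

text \<open>A test that succeeds on all samples from distributions within TV distance \<open>\<eta>\<close> of \<open>p\<close>
  loses at most \<open>n (\<alpha> - \<eta>)\<close> on a distribution at distance \<open>\<alpha>\<close>: move from \<open>q\<close> towards \<open>p\<close> until
  the distance is \<open>\<eta>\<close>.\<close>

lemma expectation_replicate_pmf_ge_tv_robust:
  fixes g :: "'a list \<Rightarrow> real"
  assumes robust: "\<And>D'. set_pmf D' \<subseteq> Z \<Longrightarrow> tv_dist p D' \<le> \<eta> \<Longrightarrow> 1 - \<delta> \<le> measure_pmf.expectation (replicate_pmf n D') g"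
    and g0: "\<And>y. 0 \<le> g y" and g1: "\<And>y. g y \<le> 1" and \<eta>0: "0 \<le> \<eta>"
    and fp: "finite (set_pmf p)" and fq: "finite (set_pmf q)"
    and pZ: "set_pmf p \<subseteq> Z" and qZ: "set_pmf q \<subseteq> Z"
  shows "1 - \<delta> - n * max 0 (tv_dist p q - \<eta>) \<le> measure_pmf.expectation (replicate_pmf n q) g"
proof -
  define \<alpha> where "\<alpha> = tv_dist p q"
  define \<theta> where "\<theta> = (if \<alpha> \<le> \<eta> then 1 else \<eta> / \<alpha>)"
  define D' where "D' = mix_pmf \<theta> q p"
  have \<alpha>0: "0 \<le> \<alpha>" unfolding \<alpha>_def by (rule tv_dist_nonneg)
  have \<theta>: "0 \<le> \<theta>" "\<theta> \<le> 1" unfolding \<theta>_def using \<eta>0 \<alpha>0 by auto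
  have fD': "finite (set_pmf D')"
    using set_mix_pmf[of \<theta> q p] fp fq unfolding D'_def by (auto intro: finite_subset)
  have "tv_dist p D' \<le> \<theta> * \<alpha>" unfolding D'_def \<alpha>_def by (rule tv_dist_mix_pmf_left[OF \<theta> fq fp])
  also have "\<theta> * \<alpha> \<le> \<eta>" unfolding \<theta>_def using \<alpha>0 \<eta>0 by auto
  finally have "1 - \<delta> \<le> measure_pmf.expectation (replicate_pmf n D') g"
    using set_mix_pmf[of \<theta> q p] pZ qZ unfolding D'_def by (intro robust) auto
  moreover have "measure_pmf.expectation (replicate_pmf n D') g - measure_pmf.expectation (replicate_pmf n q) g
      \<le> n * tv_dist D' q"
    by (rule expectation_replicate_pmf_diff_le[OF fD' fq g0 g1])
  moreover have "tv_dist D' q \<le> max 0 (\<alpha> - \<eta>)"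
  proof -
    have "tv_dist D' q \<le> (1 - \<theta>) * \<alpha>" unfolding D'_def \<alpha>_def by (rule tv_dist_mix_pmf_right[OF \<theta> fq fp])
    also have "(1 - \<theta>) * \<alpha> = max 0 (\<alpha> - \<eta>)" unfolding \<theta>_def using \<eta>0 by (auto simp: field_simps)
    finally show ?thesis .
  qed
  then have "n * tv_dist D' q \<le> n * max 0 (\<alpha> - \<eta>)" by (intro mult_left_mono) auto
  ultimately show ?thesis unfolding \<alpha>_def by linarith
qed

section \<open>Uniformly random sequences of distinct positions\<close>

definition distinct_lists :: "nat \<Rightarrow> nat \<Rightarrow> nat list set" where
  "distinct_lists m N = {is. distinct is \<and> length is = N \<and> set is \<subseteq> {..<m}}"

lemma subsample_eq_distinct_lists:
  "subsample n S = map_pmf (map (\<lambda>i. S ! i)) (pmf_of_set (distinct_lists (length S) n))"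
  unfolding subsample_def distinct_lists_def ..

lemma mem_distinct_lists: "\<pi> \<in> distinct_lists m N \<longleftrightarrow> distinct \<pi> \<and> length \<pi> = N \<and> set \<pi> \<subseteq> {..<m}"
  by (simp add: distinct_lists_def)

lemma finite_distinct_lists: "finite (distinct_lists m N)"
  unfolding distinct_lists_def
  by (rule finite_subset[OF _ finite_lists_length_eq[of "{..<m}" N]]) auto

lemma distinct_lists_nonempty: "N \<le> m \<Longrightarrow> distinct_lists m N \<noteq> {}"
  unfolding distinct_lists_def by (rule ex_in_conv[THEN iffD1], rule exI[of _ "[0..<N]"]) auto

lemma set_pmf_of_set_distinct_lists [simp]:
  "N \<le> m \<Longrightarrow> set_pmf (pmf_of_set (distinct_lists m N)) = distinct_lists m N"
  by (rule set_pmf_of_set[OF distinct_lists_nonempty finite_distinct_lists])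

lemma card_unused_positions: "r \<in> distinct_lists m t \<Longrightarrow> card ({..<m} - set r) = m - t"
  unfolding distinct_lists_def by (auto simp: card_Diff_subset distinct_card)

lemma unused_positions_nonempty: "r \<in> distinct_lists m t \<Longrightarrow> t < m \<Longrightarrow> {..<m} - set r \<noteq> {}"
  using card_unused_positions by (metis card.empty zero_less_diff less_irrefl)

lemma snoc_in_distinct_lists_iff:
  "r @ [i] \<in> distinct_lists m (Suc t) \<longleftrightarrow> r \<in> distinct_lists m t \<and> i \<in> {..<m} - set r"
  unfolding distinct_lists_def by auto

lemma distinct_lists_Suc_snoc:
  "\<pi> \<in> distinct_lists m (Suc t) \<Longrightarrow> \<pi> = take t \<pi> @ [\<pi> ! t]"
  unfolding distinct_lists_def by (auto simp: take_Suc_conv_app_nth[symmetric])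

lemma image_prefix_last_distinct_lists:
  "(\<lambda>\<pi>. (take t \<pi>, \<pi> ! t)) ` distinct_lists m (Suc t) = (\<Union>r\<in>distinct_lists m t. Pair r ` ({..<m} - set r))"
proof (intro equalityI subsetI)
  fix z assume "z \<in> (\<lambda>\<pi>. (take t \<pi>, \<pi> ! t)) ` distinct_lists m (Suc t)"
  then obtain \<pi> where \<pi>: "\<pi> \<in> distinct_lists m (Suc t)" "z = (take t \<pi>, \<pi> ! t)" by auto
  then have "take t \<pi> @ [\<pi> ! t] \<in> distinct_lists m (Suc t)"
    using distinct_lists_Suc_snoc by metis
  then show "z \<in> (\<Union>r\<in>distinct_lists m t. Pair r ` ({..<m} - set r))"
    using \<pi>(2) unfolding snoc_in_distinct_lists_iff by auto
next
  fix z assume "z \<in> (\<Union>r\<in>distinct_lists m t. Pair r ` ({..<m} - set r))"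
  then obtain r i where "r @ [i] \<in> distinct_lists m (Suc t)" "z = (r, i)"
    unfolding snoc_in_distinct_lists_iff by auto
  moreover have "length r = t"
    using \<open>r @ [i] \<in> distinct_lists m (Suc t)\<close> by (simp add: distinct_lists_def)
  ultimately show "z \<in> (\<lambda>\<pi>. (take t \<pi>, \<pi> ! t)) ` distinct_lists m (Suc t)"
    by (auto intro!: image_eqI[of _ _ "r @ [i]"])
qed

lemma map_pmf_prefix_last_distinct_lists:
  assumes "t < m"
  shows "map_pmf (\<lambda>\<pi>. (take t \<pi>, \<pi> ! t)) (pmf_of_set (distinct_lists m (Suc t)))
       = bind_pmf (pmf_of_set (distinct_lists m t)) (\<lambda>r. map_pmf (Pair r) (pmf_of_set ({..<m} - set r)))"
proof -
  have inj: "inj_on (\<lambda>\<pi>. (take t \<pi>, \<pi> ! t)) (distinct_lists m (Suc t))"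
    by (rule inj_onI) (metis distinct_lists_Suc_snoc prod.inject)
  have "map_pmf (\<lambda>\<pi>. (take t \<pi>, \<pi> ! t)) (pmf_of_set (distinct_lists m (Suc t)))
      = pmf_of_set (\<Union>r\<in>distinct_lists m t. Pair r ` ({..<m} - set r))"
    using assms by (simp add: map_pmf_of_set_inj[OF inj] distinct_lists_nonempty finite_distinct_lists
        image_prefix_last_distinct_lists)
  also have "\<dots> = bind_pmf (pmf_of_set (distinct_lists m t)) (\<lambda>r. pmf_of_set (Pair r ` ({..<m} - set r)))"
  proof (rule pmf_of_set_UN[where n = "m - t"])
    show "finite (\<Union>r\<in>distinct_lists m t. Pair r ` ({..<m} - set r))"
      using finite_distinct_lists by blast
    show "distinct_lists m t \<noteq> {}" using assms by (simp add: distinct_lists_nonempty)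
    fix r assume r: "r \<in> distinct_lists m t"
    show "Pair r ` ({..<m} - set r) \<noteq> {}" using unused_positions_nonempty[OF r assms] by simp
    show "card (Pair r ` ({..<m} - set r)) = m - t"
      using card_unused_positions[OF r] by (subst card_image) (auto simp: inj_on_def)
  qed (auto simp: disjoint_family_on_def)
  also have "\<dots> = bind_pmf (pmf_of_set (distinct_lists m t)) (\<lambda>r. map_pmf (Pair r) (pmf_of_set ({..<m} - set r)))"
    using assms
    by (intro bind_pmf_cong refl map_pmf_of_set_inj[symmetric])
       (auto simp: inj_on_def, metis Diff_eq_empty_iff unused_positions_nonempty)
  finally show ?thesis .
qed

lemma map_pmf_take_distinct_lists:
  assumes "a \<le> N" "N \<le> m"
  shows "map_pmf (take a) (pmf_of_set (distinct_lists m N)) = pmf_of_set (distinct_lists m a)"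
  using assms
proof (induction N rule: dec_induct)
  case base
  have "take a \<pi> = \<pi>" if "\<pi> \<in> distinct_lists m a" for \<pi>
    using that by (simp add: distinct_lists_def)
  then have "map_pmf (take a) (pmf_of_set (distinct_lists m a)) = map_pmf id (pmf_of_set (distinct_lists m a))"
    using base by (intro map_pmf_cong) auto
  then show ?case by simp
next
  case (step N)
  have "map_pmf (take N) (pmf_of_set (distinct_lists m (Suc N)))
      = map_pmf fst (map_pmf (\<lambda>\<pi>. (take N \<pi>, \<pi> ! N)) (pmf_of_set (distinct_lists m (Suc N))))"
    by (simp add: map_pmf_comp)
  also have "\<dots> = pmf_of_set (distinct_lists m N)"
    using step by (simp add: map_pmf_prefix_last_distinct_lists map_bind_pmf map_pmf_comp bind_return_pmf'
        flip: return_pmf_def[unfolded map_pmf_def] )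
  finally have take_N: "map_pmf (take N) (pmf_of_set (distinct_lists m (Suc N))) = pmf_of_set (distinct_lists m N)" .
  have "map_pmf (take a) (pmf_of_set (distinct_lists m (Suc N)))
      = map_pmf (take a) (map_pmf (take N) (pmf_of_set (distinct_lists m (Suc N))))"
    unfolding map_pmf_comp using step(1) by (simp add: min_def)
  then show ?case using step take_N by simp
qed

lemma map_pmf_prefix_next_distinct_lists:
  assumes "t < N" "N \<le> m"
  shows "map_pmf (\<lambda>\<pi>. (take t \<pi>, \<pi> ! t)) (pmf_of_set (distinct_lists m N))
       = bind_pmf (pmf_of_set (distinct_lists m t)) (\<lambda>r. map_pmf (Pair r) (pmf_of_set ({..<m} - set r)))"
proof -
  have "map_pmf (\<lambda>\<pi>. (take t \<pi>, \<pi> ! t)) (pmf_of_set (distinct_lists m N))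
      = map_pmf (\<lambda>\<pi>. (take t \<pi>, \<pi> ! t)) (map_pmf (take (Suc t)) (pmf_of_set (distinct_lists m N)))"
    unfolding map_pmf_comp by (simp add: min_def)
  also have "\<dots> = map_pmf (\<lambda>\<pi>. (take t \<pi>, \<pi> ! t)) (pmf_of_set (distinct_lists m (Suc t)))"
    using assms by (simp add: map_pmf_take_distinct_lists)
  finally show ?thesis using assms by (simp add: map_pmf_prefix_last_distinct_lists)
qed

lemma inj_rotate: "inj (rotate n)"
proof (induction n)
  case 0 then show ?case by simp
next
  case (Suc n)
  have "rotate (Suc n) = rotate1 \<circ> rotate n" by (rule ext) simp
  then show ?case using inj_compose[OF inj_rotate1 Suc.IH] by (simp add: comp_def)
qed

lemma map_pmf_rotate_distinct_lists:
  assumes "N \<le> m"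
  shows "map_pmf (rotate t) (pmf_of_set (distinct_lists m N)) = pmf_of_set (distinct_lists m N)"
proof -
  have inj: "inj_on (rotate t) (distinct_lists m N)" using inj_rotate by (rule inj_on_subset) simp
  have "rotate t ` distinct_lists m N = distinct_lists m N"
    by (rule endo_inj_surj[OF finite_distinct_lists _ inj]) (auto simp: distinct_lists_def)
  then show ?thesis
    using map_pmf_of_set_inj[OF inj distinct_lists_nonempty[OF assms] finite_distinct_lists] by simp
qed

lemma map_pmf_window_distinct_lists:
  assumes "t + n \<le> N" "N \<le> m"
  shows "map_pmf (\<lambda>\<pi>. take n (drop t \<pi>)) (pmf_of_set (distinct_lists m N)) = pmf_of_set (distinct_lists m n)"
proof -
  have "map_pmf (\<lambda>\<pi>. take n (drop t \<pi>)) (pmf_of_set (distinct_lists m N))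
      = map_pmf (\<lambda>\<pi>. take n (rotate t \<pi>)) (pmf_of_set (distinct_lists m N))"
  proof (rule map_pmf_cong[OF refl])
    fix \<pi> assume "\<pi> \<in> set_pmf (pmf_of_set (distinct_lists m N))"
    then have "\<pi> \<in> distinct_lists m N" using assms by simp
    then have len: "length \<pi> = N" by (simp add: distinct_lists_def)
    show "take n (drop t \<pi>) = take n (rotate t \<pi>)"
    proof (cases "t < N")
      case True
      then show ?thesis using len assms by (simp add: rotate_drop_take)
    next
      case False
      then have "n = 0" using assms by simp
      then show ?thesis by simp
    qed
  qed
  also have "\<dots> = map_pmf (take n) (map_pmf (rotate t) (pmf_of_set (distinct_lists m N)))"
    by (simp add: map_pmf_comp)
  also have "\<dots> = pmf_of_set (distinct_lists m n)"
    using assms by (simp add: map_pmf_rotate_distinct_lists map_pmf_take_distinct_lists)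
  finally show ?thesis .
qed

text \<open>Swapping the entries at \<open>s\<close> and \<open>s'\<close> is a bijection of the distinct lists that fixes
  the first \<open>s\<close> entries.\<close>

lemma map_pmf_prefix_later_distinct_lists:
  assumes "s \<le> s'" "s' < N" "N \<le> m"
  shows "map_pmf (\<lambda>\<pi>. (take s \<pi>, \<pi> ! s')) (pmf_of_set (distinct_lists m N))
       = map_pmf (\<lambda>\<pi>. (take s \<pi>, \<pi> ! s)) (pmf_of_set (distinct_lists m N))"
proof -
  define \<sigma> where "\<sigma> \<pi> = \<pi>[s := \<pi> ! s', s' := \<pi> ! s]" for \<pi> :: "nat list"
  have inv: "\<sigma> (\<sigma> \<pi>) = \<pi>" if "\<pi> \<in> distinct_lists m N" for \<pi>
    using that assms unfolding \<sigma>_def distinct_lists_def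
    by (intro nth_equalityI) (auto simp: nth_list_update)
  have inj: "inj_on \<sigma> (distinct_lists m N)" by (metis inj_onI inv)
  have "\<sigma> ` distinct_lists m N \<subseteq> distinct_lists m N"
    using assms unfolding \<sigma>_def distinct_lists_def by auto
  then have "\<sigma> ` distinct_lists m N = distinct_lists m N"
    by (rule endo_inj_surj[OF finite_distinct_lists _ inj])
  then have U: "map_pmf \<sigma> (pmf_of_set (distinct_lists m N)) = pmf_of_set (distinct_lists m N)"
    using map_pmf_of_set_inj[OF inj distinct_lists_nonempty finite_distinct_lists] assms by simp
  have "map_pmf (\<lambda>\<pi>. (take s \<pi>, \<pi> ! s')) (pmf_of_set (distinct_lists m N))
      = map_pmf (\<lambda>\<pi>. (take s \<pi>, \<pi> ! s')) (map_pmf \<sigma> (pmf_of_set (distinct_lists m N)))"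
    using U by simp
  also have "\<dots> = map_pmf (\<lambda>\<pi>. (take s \<pi>, \<pi> ! s)) (pmf_of_set (distinct_lists m N))"
  proof -
    have "(take s (\<sigma> \<pi>), \<sigma> \<pi> ! s') = (take s \<pi>, \<pi> ! s)" if "\<pi> \<in> distinct_lists m N" for \<pi>
      using that assms by (auto simp: \<sigma>_def distinct_lists_def nth_list_update)
    then show ?thesis unfolding map_pmf_comp using assms by (intro map_pmf_cong) auto
  qed
  finally show ?thesis .
qed

section \<open>Independent samples\<close>

lemma pair_pmf_eq_bind_pmf: "pair_pmf A B = bind_pmf A (\<lambda>x. map_pmf (Pair x) B)"
  by (simp add: pair_pmf_def map_pmf_def)

lemma replicate_pmf_Suc_pair:
  "replicate_pmf (Suc n) q = map_pmf (\<lambda>(x, xs). x # xs) (pair_pmf q (replicate_pmf n q))"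
  unfolding replicate_pmf_Suc_bind pair_pmf_eq_bind_pmf map_bind_pmf map_pmf_comp by simp

lemma map_pmf_nth_replicate_pmf:
  "i < m \<Longrightarrow> map_pmf (\<lambda>S. S ! i) (replicate_pmf m p) = p"
proof (induction m arbitrary: i)
  case 0 then show ?case by simp
next
  case (Suc m)
  then show ?case
    unfolding replicate_pmf_Suc_bind map_bind_pmf map_pmf_comp
    by (cases i) (simp_all add: bind_return_pmf')
qed

lemma pmf_replicate_pmf:
  "length ys = n \<Longrightarrow> pmf (replicate_pmf n q) ys = (\<Prod>l<n. pmf q (ys ! l))"
proof (induction n arbitrary: ys)
  case 0 then show ?case by simp
next
  case (Suc n)
  then obtain y ys' where ys: "ys = y # ys'" "length ys' = n" by (cases ys) auto
  have inj: "inj (\<lambda>(x::'a, xs). x # xs)" by (auto simp: inj_on_def)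
  have "pmf (replicate_pmf (Suc n) q) ys = pmf (pair_pmf q (replicate_pmf n q)) (y, ys')"
    unfolding replicate_pmf_Suc_pair ys(1) using pmf_map_inj'[OF inj, of _ "(y, ys')"] by simp
  also have "\<dots> = pmf q y * pmf (replicate_pmf n q) ys'"
    by (simp add: pmf_pair)
  also have "\<dots> = (\<Prod>l<Suc n. pmf q (ys ! l))"
    using Suc.IH[OF ys(2)] ys by (subst prod.lessThan_Suc_shift) simp
  finally show ?case .
qed

lemma KL_pmf_eq_cross_entropy:
  assumes "\<And>z. z \<in> set_pmf \<nu> \<Longrightarrow> 0 < pmf \<nu>' z"
  shows "KL_pmf \<nu> \<nu>' = - entropy_pmf \<nu> - (\<Sum>z\<in>set_pmf \<nu>. pmf \<nu> z * ln (pmf \<nu>' z))"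
proof -
  have "KL_pmf \<nu> \<nu>' = (\<Sum>z\<in>set_pmf \<nu>. pmf \<nu> z * ln (pmf \<nu> z) - pmf \<nu> z * ln (pmf \<nu>' z))"
    unfolding KL_pmf_def
  proof (intro sum.cong refl)
    fix z assume z: "z \<in> set_pmf \<nu>"
    then have "0 < pmf \<nu> z" "0 < pmf \<nu>' z" using assms by (auto simp: pmf_positive)
    then show "pmf \<nu> z * ln (pmf \<nu> z / pmf \<nu>' z) = pmf \<nu> z * ln (pmf \<nu> z) - pmf \<nu> z * ln (pmf \<nu>' z)"
      by (simp add: ln_div right_diff_distrib)
  qed
  then show ?thesis by (simp add: entropy_pmf_def sum_subtractf sum_negf)
qed

lemma cross_entropy_map_pmf:
  assumes "finite (set_pmf \<nu>)" "map_pmf f \<nu> = \<rho>"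
  shows "(\<Sum>z\<in>set_pmf \<nu>. pmf \<nu> z * ln (pmf \<rho> (f z))) = - entropy_pmf \<rho>"
  using sum_pmf_map_pmf[OF assms(1), of "\<lambda>a. ln (pmf \<rho> a)" f] assms(2)
  by (simp add: entropy_pmf_def sum_negf)

lemma pmf_bind_replicate_pmf:
  assumes kernel: "\<rho> = bind_pmf \<rho>\<^sub>1 (\<lambda>\<gamma>. map_pmf (Pair \<gamma>) (q \<gamma>))"
    and len: "length ys = n" and pos\<^sub>1: "0 < pmf \<rho>\<^sub>1 g" and pos: "\<And>l. l < n \<Longrightarrow> 0 < pmf \<rho> (g, ys ! l)"
  defines "\<nu>' \<equiv> bind_pmf \<rho>\<^sub>1 (\<lambda>\<gamma>. map_pmf (Pair \<gamma>) (replicate_pmf n (q \<gamma>)))"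
  shows "0 < pmf \<nu>' (g, ys)"
    and "ln (pmf \<nu>' (g, ys)) = ln (pmf \<rho>\<^sub>1 g) + (\<Sum>l<n. ln (pmf \<rho> (g, ys ! l)) - ln (pmf \<rho>\<^sub>1 g))"
proof -
  have pmf_\<nu>': "pmf \<nu>' (g, ys) = pmf \<rho>\<^sub>1 g * (\<Prod>l<n. pmf \<rho> (g, ys ! l) / pmf \<rho>\<^sub>1 g)"
    using pmf_replicate_pmf[OF len, of "q g"] pos\<^sub>1 by (simp add: \<nu>'_def kernel pmf_bind_pmf_Pair)
  have prod_pos: "0 < (\<Prod>l<n. pmf \<rho> (g, ys ! l) / pmf \<rho>\<^sub>1 g)"
    using pos\<^sub>1 pos by (intro prod_pos divide_pos_pos) auto
  show "0 < pmf \<nu>' (g, ys)" unfolding pmf_\<nu>' using pos\<^sub>1 prod_pos by simp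
  have "ln (\<Prod>l<n. pmf \<rho> (g, ys ! l) / pmf \<rho>\<^sub>1 g) = (\<Sum>l<n. ln (pmf \<rho> (g, ys ! l) / pmf \<rho>\<^sub>1 g))"
    using pos\<^sub>1 pos by (intro ln_prod) (simp, metis divide_pos_pos lessThan_iff less_irrefl)
  also have "\<dots> = (\<Sum>l<n. ln (pmf \<rho> (g, ys ! l)) - ln (pmf \<rho>\<^sub>1 g))"
  proof (intro sum.cong refl)
    fix l assume "l \<in> {..<n}"
    then show "ln (pmf \<rho> (g, ys ! l) / pmf \<rho>\<^sub>1 g) = ln (pmf \<rho> (g, ys ! l)) - ln (pmf \<rho>\<^sub>1 g)"
      using pos\<^sub>1 pos[of l] by (simp add: ln_div)
  qed
  finally show "ln (pmf \<nu>' (g, ys)) = ln (pmf \<rho>\<^sub>1 g) + (\<Sum>l<n. ln (pmf \<rho> (g, ys ! l)) - ln (pmf \<rho>\<^sub>1 g))"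
    unfolding pmf_\<nu>' ln_mult_pos[OF pos\<^sub>1 prod_pos] by simp
qed

text \<open>The divergence from the conditionally i.i.d. model is the total correlation of the
  coordinates given the first component.\<close>

lemma KL_pmf_bind_replicate_pmf:
  fixes \<nu> :: "('g \<times> 'y list) pmf" and \<rho> :: "('g \<times> 'y) pmf"
  assumes fin: "finite (set_pmf \<nu>)"
    and len: "\<And>z. z \<in> set_pmf \<nu> \<Longrightarrow> length (snd z) = n"
    and marg: "\<And>l. l < n \<Longrightarrow> map_pmf (\<lambda>z. (fst z, snd z ! l)) \<nu> = \<rho>"
    and marg\<^sub>1: "map_pmf fst \<nu> = \<rho>\<^sub>1"
    and kernel: "\<rho> = bind_pmf \<rho>\<^sub>1 (\<lambda>\<gamma>. map_pmf (Pair \<gamma>) (q \<gamma>))"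
  defines "\<nu>' \<equiv> bind_pmf \<rho>\<^sub>1 (\<lambda>\<gamma>. map_pmf (Pair \<gamma>) (replicate_pmf n (q \<gamma>)))"
  shows "set_pmf \<nu> \<subseteq> set_pmf \<nu>'" "KL_pmf \<nu> \<nu>' = n * (entropy_pmf \<rho> - entropy_pmf \<rho>\<^sub>1) + entropy_pmf \<rho>\<^sub>1 - entropy_pmf \<nu>"
proof -
  have model: "0 < pmf \<nu>' z \<and> ln (pmf \<nu>' z) = ln (pmf \<rho>\<^sub>1 (fst z))
      + (\<Sum>l<n. ln (pmf \<rho> (fst z, snd z ! l)) - ln (pmf \<rho>\<^sub>1 (fst z)))" if z: "z \<in> set_pmf \<nu>" for z
  proof -
    have "0 < pmf \<rho>\<^sub>1 (fst z)" using z marg\<^sub>1[symmetric] by (auto simp: pmf_positive)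
    moreover have "0 < pmf \<rho> (fst z, snd z ! l)" if "l < n" for l
      using z marg[OF that, symmetric] by (auto simp: pmf_positive)
    ultimately show ?thesis
      using pmf_bind_replicate_pmf[OF kernel len[OF z], of "fst z"] by (simp add: \<nu>'_def)
  qed
  then have pos': "0 < pmf \<nu>' z" if "z \<in> set_pmf \<nu>" for z using that by blast
  then show "set_pmf \<nu> \<subseteq> set_pmf \<nu>'" by (metis less_irrefl set_pmf_iff subsetI)
  have "(\<Sum>z\<in>set_pmf \<nu>. pmf \<nu> z * ln (pmf \<nu>' z))
      = (\<Sum>z\<in>set_pmf \<nu>. pmf \<nu> z * ln (pmf \<rho>\<^sub>1 (fst z)))
        + (\<Sum>l<n. (\<Sum>z\<in>set_pmf \<nu>. pmf \<nu> z * ln (pmf \<rho> (fst z, snd z ! l)))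
                 - (\<Sum>z\<in>set_pmf \<nu>. pmf \<nu> z * ln (pmf \<rho>\<^sub>1 (fst z))))"
  proof -
    have "(\<Sum>z\<in>set_pmf \<nu>. pmf \<nu> z * ln (pmf \<nu>' z))
        = (\<Sum>z\<in>set_pmf \<nu>. pmf \<nu> z * ln (pmf \<rho>\<^sub>1 (fst z))
            + (\<Sum>l<n. pmf \<nu> z * ln (pmf \<rho> (fst z, snd z ! l)) - pmf \<nu> z * ln (pmf \<rho>\<^sub>1 (fst z))))"
      by (intro sum.cong refl) (simp add: model distrib_left sum_distrib_left right_diff_distrib)
    then show ?thesis
      by (simp add: sum.distrib sum_subtractf sum_distrib_left sum.swap[of _ "set_pmf \<nu>" "{..<n}"])
  qed
  also have "\<dots> = - entropy_pmf \<rho>\<^sub>1 + n * (entropy_pmf \<rho>\<^sub>1 - entropy_pmf \<rho>)"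
    using cross_entropy_map_pmf[OF fin marg\<^sub>1] cross_entropy_map_pmf[OF fin marg] by simp
  finally show "KL_pmf \<nu> \<nu>' = n * (entropy_pmf \<rho> - entropy_pmf \<rho>\<^sub>1) + entropy_pmf \<rho>\<^sub>1 - entropy_pmf \<nu>"
    using KL_pmf_eq_cross_entropy[of \<nu> \<nu>', OF pos'] by (simp add: algebra_simps)
qed

lemma entropy_pmf_pair_pmf_chain_rule:
  assumes "finite (set_pmf p)" "finite (set_pmf Q)"
  shows "entropy_pmf (map_pmf (\<lambda>\<omega>. (fst \<omega>, F \<omega>)) (pair_pmf p Q))
       = entropy_pmf p + (\<Sum>x\<in>set_pmf p. pmf p x * entropy_pmf (map_pmf (\<lambda>y. F (x, y)) Q))"
proof -
  have "map_pmf (\<lambda>\<omega>. (fst \<omega>, F \<omega>)) (pair_pmf p Q)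
      = bind_pmf p (\<lambda>x. map_pmf (Pair x) (map_pmf (\<lambda>y. F (x, y)) Q))"
    unfolding pair_pmf_eq_bind_pmf map_bind_pmf map_pmf_comp by simp
  then show ?thesis using assms by (simp add: entropy_pmf_bind_Pair)
qed

text \<open>The right-hand side is the mutual information given the first coordinate, which is
  independent of \<open>B\<close>; conditioning on an independent variable can only increase it.\<close>

lemma mutual_info_pair_pmf_le_average:
  assumes fp: "finite (set_pmf p)" and fQ: "finite (set_pmf Q)"
  shows "mutual_info_pmf (pair_pmf p Q) (\<lambda>\<omega>. \<phi> (fst \<omega>) (snd \<omega>)) (\<lambda>\<omega>. B (snd \<omega>))
       \<le> (\<Sum>x\<in>set_pmf p. pmf p x * mutual_info_pmf Q (\<phi> x) B)"
proof -
  let ?\<mu> = "pair_pmf p Q" and ?\<psi> = "\<lambda>\<omega>. \<phi> (fst \<omega>) (snd \<omega>)" and ?B = "\<lambda>\<omega>. B (snd \<omega>)"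
  have fin: "finite (set_pmf ?\<mu>)" using fp fQ by simp
  have "entropy_pmf (map_pmf (\<lambda>\<omega>. (?\<psi> \<omega>, fst \<omega>, ?B \<omega>)) ?\<mu>) + entropy_pmf (map_pmf ?\<psi> ?\<mu>)
      \<le> entropy_pmf (map_pmf (\<lambda>\<omega>. (?\<psi> \<omega>, fst \<omega>)) ?\<mu>) + entropy_pmf (map_pmf (\<lambda>\<omega>. (?\<psi> \<omega>, ?B \<omega>)) ?\<mu>)"
    by (rule entropy_pmf_submodular[OF fin])
  moreover have "entropy_pmf (map_pmf (\<lambda>\<omega>. (?\<psi> \<omega>, fst \<omega>, ?B \<omega>)) ?\<mu>)
      = entropy_pmf (map_pmf (\<lambda>\<omega>. (fst \<omega>, ?\<psi> \<omega>, ?B \<omega>)) ?\<mu>)"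
    by (rule entropy_pmf_map_cong_inj[where h = "\<lambda>(x, a, b). (a, x, b)"]) (auto simp: inj_on_def)
  moreover have "entropy_pmf (map_pmf (\<lambda>\<omega>. (?\<psi> \<omega>, fst \<omega>)) ?\<mu>) = entropy_pmf (map_pmf (\<lambda>\<omega>. (fst \<omega>, ?\<psi> \<omega>)) ?\<mu>)"
    by (rule entropy_pmf_map_pair_swap)
  moreover have "entropy_pmf (map_pmf ?B ?\<mu>) = entropy_pmf (map_pmf B Q)"
    using map_pmf_comp[of B snd ?\<mu>] by (simp add: map_snd_pair_pmf comp_def)
  moreover have "(\<Sum>x\<in>set_pmf p. pmf p x * mutual_info_pmf Q (\<phi> x) B)
      = (\<Sum>x\<in>set_pmf p. pmf p x * entropy_pmf (map_pmf (\<phi> x) Q))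
        + (\<Sum>x\<in>set_pmf p. pmf p x) * entropy_pmf (map_pmf B Q)
        - (\<Sum>x\<in>set_pmf p. pmf p x * entropy_pmf (map_pmf (\<lambda>y. (\<phi> x y, B y)) Q))"
    unfolding mutual_info_pmf_def
    by (simp add: algebra_simps sum.distrib sum_subtractf sum_distrib_left sum_distrib_right)
  ultimately show ?thesis
    using entropy_pmf_pair_pmf_chain_rule[OF fp fQ, of ?\<psi>]
      entropy_pmf_pair_pmf_chain_rule[OF fp fQ, of "\<lambda>\<omega>. (?\<psi> \<omega>, ?B \<omega>)"] sum_pmf_eq_1[OF fp]
    unfolding mutual_info_pmf_def by simp
qed

lemma expectation_tv_dist_le_mutual_info:
  assumes fin\<rho>: "finite (set_pmf \<rho>)" and fin_u: "\<And>\<gamma>. \<gamma> \<in> set_pmf \<rho> \<Longrightarrow> finite (set_pmf (u \<gamma>))"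
    and fin_p: "finite (set_pmf p)"
    and marginal: "map_pmf snd (bind_pmf \<rho> (\<lambda>\<gamma>. map_pmf (Pair \<gamma>) (u \<gamma>))) = p"
  shows "measure_pmf.expectation \<rho> (\<lambda>\<gamma>. tv_dist p (u \<gamma>))
       \<le> sqrt (mutual_info_pmf (bind_pmf \<rho> (\<lambda>\<gamma>. map_pmf (Pair \<gamma>) (u \<gamma>))) fst snd)"
proof -
  define \<sigma> where "\<sigma> = bind_pmf \<rho> (\<lambda>\<gamma>. map_pmf (Pair \<gamma>) (u \<gamma>))"
  let ?Q = "pair_pmf \<rho> p"
  define A where "A \<gamma> = {x. pmf p x < pmf (u \<gamma>) x}" for \<gamma>
  define h where "h z = (indicator (A (fst z)) (snd z) :: real)" for z
  have marginals: "map_pmf fst \<sigma> = \<rho>" "map_pmf snd \<sigma> = p"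
    using marginal by (simp_all add: \<sigma>_def map_bind_pmf map_pmf_comp bind_return_pmf' flip: return_pmf_def)
  have "measure_pmf.expectation \<rho> (\<lambda>\<gamma>. tv_dist p (u \<gamma>))
      \<le> measure_pmf.expectation \<rho> (\<lambda>\<gamma>. measure_pmf.prob (u \<gamma>) (A \<gamma>) - measure_pmf.prob p (A \<gamma>))"
    unfolding A_def using fin\<rho> fin_p fin_u
    by (intro integral_mono_AE) (auto simp: AE_measure_pmf_iff integrable_measure_pmf_finite tv_dist_le_excess)
  also have "\<dots> = measure_pmf.expectation \<rho> (\<lambda>\<gamma>. measure_pmf.prob (u \<gamma>) (A \<gamma>))
      - measure_pmf.expectation \<rho> (\<lambda>\<gamma>. measure_pmf.prob p (A \<gamma>))"
    by (rule Bochner_Integration.integral_diff) (rule integrable_measure_pmf_finite[OF fin\<rho>])+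
  also have "measure_pmf.expectation \<rho> (\<lambda>\<gamma>. measure_pmf.prob (u \<gamma>) (A \<gamma>)) = measure_pmf.expectation \<sigma> h"
    unfolding \<sigma>_def by (subst expectation_bind_pmf_finite[OF fin\<rho>]) (auto simp: fin_u h_def)
  also have "measure_pmf.expectation \<rho> (\<lambda>\<gamma>. measure_pmf.prob p (A \<gamma>)) = measure_pmf.expectation ?Q h"
    unfolding pair_pmf_eq_bind_pmf by (subst expectation_bind_pmf_finite[OF fin\<rho>]) (auto simp: fin_p h_def)
  also have "measure_pmf.expectation \<sigma> h - measure_pmf.expectation ?Q h \<le> sqrt (KL_pmf \<sigma> ?Q)"
  proof -
    have "set_pmf \<sigma> \<subseteq> set_pmf ?Q"
    proof
      fix z assume "z \<in> set_pmf \<sigma>"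
      then have "fst z \<in> set_pmf (map_pmf fst \<sigma>)" "snd z \<in> set_pmf (map_pmf snd \<sigma>)"
        by (simp_all only: set_map_pmf imageI)
      then show "z \<in> set_pmf ?Q" unfolding marginals by (cases z) simp
    qed
    then show ?thesis
      using abs_expectation_diff_le_KL_pmf[of ?Q \<sigma> h] fin\<rho> fin_p by (simp add: h_def)
  qed
  also have "KL_pmf \<sigma> ?Q = mutual_info_pmf \<sigma> fst snd"
    using KL_pmf_pair_marginals[of \<sigma>] fin\<rho> fin_u marginals
    by (simp add: \<sigma>_def set_bind_pmf_Pair)
  finally show ?thesis unfolding \<sigma>_def .
qed

lemma sum_mutual_info_nth_replicate_pmf_le:
  assumes fp: "finite (set_pmf p)"
  shows "(\<Sum>i<m. mutual_info_pmf (replicate_pmf m p) \<phi> (\<lambda>S. S ! i))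
       \<le> entropy_pmf (map_pmf \<phi> (replicate_pmf m p))"
proof (induction m arbitrary: \<phi>)
  case 0 then show ?case by (simp add: entropy_pmf_nonneg)
next
  case (Suc m)
  let ?Q = "replicate_pmf m p"
  let ?\<mu> = "pair_pmf p ?Q"
  let ?\<psi> = "\<lambda>\<omega>. \<phi> (fst \<omega> # snd \<omega>)"
  have fQ: "finite (set_pmf ?Q)" using fp by (rule finite_set_replicate_pmf)
  have cons: "mutual_info_pmf (replicate_pmf (Suc m) p) \<phi> B = mutual_info_pmf ?\<mu> ?\<psi> (\<lambda>\<omega>. B (fst \<omega> # snd \<omega>))"
    for B :: "'a list \<Rightarrow> 'a"
    unfolding replicate_pmf_Suc_pair mutual_info_pmf_def map_pmf_comp by (simp add: case_prod_beta)
  have "(\<Sum>i<Suc m. mutual_info_pmf (replicate_pmf (Suc m) p) \<phi> (\<lambda>S. S ! i))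
      = mutual_info_pmf ?\<mu> ?\<psi> fst + (\<Sum>j<m. mutual_info_pmf ?\<mu> ?\<psi> (\<lambda>\<omega>. snd \<omega> ! j))"
    by (subst sum.lessThan_Suc_shift) (simp only: cons nth_Cons_0 nth_Cons_Suc)
  also have "\<dots> \<le> mutual_info_pmf ?\<mu> ?\<psi> fst
      + (\<Sum>j<m. \<Sum>x\<in>set_pmf p. pmf p x * mutual_info_pmf ?Q (\<lambda>xs. \<phi> (x # xs)) (\<lambda>xs. xs ! j))"
    using mutual_info_pair_pmf_le_average[OF fp fQ, of "\<lambda>x xs. \<phi> (x # xs)"]
    by (intro add_left_mono sum_mono) simp
  also have "\<dots> = mutual_info_pmf ?\<mu> ?\<psi> fst
      + (\<Sum>x\<in>set_pmf p. pmf p x * (\<Sum>j<m. mutual_info_pmf ?Q (\<lambda>xs. \<phi> (x # xs)) (\<lambda>xs. xs ! j)))"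
    by (subst sum.swap) (simp add: sum_distrib_left)
  also have "\<dots> \<le> mutual_info_pmf ?\<mu> ?\<psi> fst
      + (\<Sum>x\<in>set_pmf p. pmf p x * entropy_pmf (map_pmf (\<lambda>xs. \<phi> (x # xs)) ?Q))"
    using Suc.IH by (intro add_left_mono sum_mono mult_left_mono) auto
  also have "\<dots> = entropy_pmf (map_pmf \<phi> (replicate_pmf (Suc m) p))"
    using entropy_pmf_pair_pmf_chain_rule[OF fp fQ, of ?\<psi>] entropy_pmf_map_pair_swap[of ?\<psi> fst ?\<mu>]
    unfolding mutual_info_pmf_def replicate_pmf_Suc_pair map_pmf_comp
    by (simp add: case_prod_beta map_fst_pair_pmf)
  finally show ?case .
qed

lemma sum_measure_pmf_le_card_bound:
  assumes "finite A" and card: "\<And>x. x \<in> set_pmf M \<Longrightarrow> P x \<Longrightarrow> card {i\<in>A. Q i x} \<le> k"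
  shows "(\<Sum>i\<in>A. measure_pmf.prob M {x. P x \<and> Q i x}) \<le> k * measure_pmf.prob M {x. P x}"
proof -
  have "(\<Sum>i\<in>A. measure_pmf.prob M {x. P x \<and> Q i x})
      = measure_pmf.expectation M (\<lambda>x. \<Sum>i\<in>A. indicator {x. P x \<and> Q i x} x)"
    by (subst Bochner_Integration.integral_sum)
       (auto intro!: measure_pmf.integrable_const_bound[where B = 1])
  also have "\<dots> \<le> measure_pmf.expectation M (\<lambda>x. real k * indicator {x. P x} x)"
  proof (rule integral_mono_AE)
    show "AE x in measure_pmf M. (\<Sum>i\<in>A. indicator {x. P x \<and> Q i x} x) \<le> real k * indicator {x. P x} x"
    proof (rule AE_pmfI)
      fix x assume "x \<in> set_pmf M"
      then show "(\<Sum>i\<in>A. indicator {x. P x \<and> Q i x} x) \<le> real k * indicator {x. P x} x"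
        using card[of x] \<open>finite A\<close> by (auto simp: indicator_def sum.If_cases Int_def)
    qed
  qed (auto intro!: Bochner_Integration.integrable_sum measure_pmf.integrable_const_bound[where B = 1])
  finally show ?thesis by simp
qed

section \<open>Subsampling a corrupted sample\<close>

text \<open>An outcome \<open>\<omega> = (S, \<pi>)\<close> of \<open>\<mu>\<close> is a clean sample together with a uniformly random
  sequence of \<open>N\<close> distinct positions; \<open>hist s\<close> and \<open>corrupt_at s\<close> are the \<open>G_s\<close> and \<open>Y_s\<close> of the
  proof idea, and \<open>clean_at s\<close> is the clean example at \<open>\<pi>\<^sub>s\<close>.\<close>

locale nasty_subsampling =
  fixes p :: "'z pmf" and Z :: "'z set" and adv :: "'z list \<Rightarrow> 'z list" and m k N :: nat
  assumes finite_Z: "finite Z" and set_pmf_p: "set_pmf p \<subseteq> Z"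
    and adv: "\<And>S. S \<in> set_pmf (replicate_pmf m p) \<Longrightarrow>
      length (adv S) = m \<and> set (adv S) \<subseteq> Z \<and> card {i. i < m \<and> adv S ! i \<noteq> S ! i} \<le> k"
    and N_le_m: "N \<le> m"
begin

definition "\<mu> = pair_pmf (replicate_pmf m p) (pmf_of_set (distinct_lists m N))"

definition "seen r S = map (\<lambda>i. adv S ! i) r"

definition "hist s \<omega> = (take s (snd \<omega>), seen (take s (snd \<omega>)) (fst \<omega>))"

definition "corrupt_at s \<omega> = adv (fst \<omega>) ! (snd \<omega> ! s)"

definition "clean_at s \<omega> = fst \<omega> ! (snd \<omega> ! s)"

definition "window t n \<omega> = seen (take n (drop t (snd \<omega>))) (fst \<omega>)"

definition "next_entropy s = cond_entropy_pmf \<mu> (corrupt_at s) (hist s)"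

definition "next_info s = mutual_info_pmf \<mu> (hist s) (clean_at s)"

definition "corrupt_law t \<gamma> = map_pmf (corrupt_at t) (cond_value_pmf \<mu> (hist t) \<gamma>)"

definition "clean_law t \<gamma> = map_pmf (clean_at t) (cond_value_pmf \<mu> (hist t) \<gamma>)"

lemma finite_set_pmf_p: "finite (set_pmf p)"
  using finite_subset[OF set_pmf_p finite_Z] .

lemma finite_set_pmf_sample: "finite (set_pmf (replicate_pmf m p))"
  using finite_set_pmf_p by (rule finite_set_replicate_pmf)

lemma finite_set_pmf_\<mu>: "finite (set_pmf \<mu>)"
  unfolding \<mu>_def using finite_set_pmf_sample N_le_m by (simp add: finite_distinct_lists)

lemma set_pmf_\<mu>_D:
  assumes "\<omega> \<in> set_pmf \<mu>"
  shows "fst \<omega> \<in> set_pmf (replicate_pmf m p)" "length (adv (fst \<omega>)) = m" "set (adv (fst \<omega>)) \<subseteq> Z"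
    "length (snd \<omega>) = N" "distinct (snd \<omega>)" "set (snd \<omega>) \<subseteq> {..<m}"
proof -
  have "fst \<omega> \<in> set_pmf (replicate_pmf m p)" "snd \<omega> \<in> distinct_lists m N"
    using assms N_le_m by (auto simp: \<mu>_def)
  then show "fst \<omega> \<in> set_pmf (replicate_pmf m p)" "length (adv (fst \<omega>)) = m" "set (adv (fst \<omega>)) \<subseteq> Z"
    "length (snd \<omega>) = N" "distinct (snd \<omega>)" "set (snd \<omega>) \<subseteq> {..<m}"
    using adv[of "fst \<omega>"] by (auto simp: mem_distinct_lists)
qed

lemma corrupt_at_in_Z: "\<omega> \<in> set_pmf \<mu> \<Longrightarrow> s < N \<Longrightarrow> corrupt_at s \<omega> \<in> Z"
  using set_pmf_\<mu>_D[of \<omega>] nth_mem[of s "snd \<omega>"] unfolding corrupt_at_def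
  by (metis lessThan_iff nth_mem subsetD)

lemma map_pmf_\<mu>_eq_bind:
  "map_pmf (\<lambda>\<omega>. (C (snd \<omega>), F (C (snd \<omega>)) (fst \<omega>))) \<mu>
     = bind_pmf (map_pmf C (pmf_of_set (distinct_lists m N)))
         (\<lambda>c. map_pmf (Pair c) (map_pmf (F c) (replicate_pmf m p)))"
proof -
  have "\<mu> = map_pmf (\<lambda>(x, y). (y, x))
      (bind_pmf (pmf_of_set (distinct_lists m N)) (\<lambda>\<pi>. map_pmf (Pair \<pi>) (replicate_pmf m p)))"
    unfolding \<mu>_def by (subst pair_commute_pmf) (simp add: pair_pmf_eq_bind_pmf)
  then show ?thesis by (simp add: map_pmf_comp map_bind_pmf bind_map_pmf)
qed

lemma map_pmf_clean_at:
  assumes "t < N"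
  shows "map_pmf (clean_at t) \<mu> = p"
proof -
  let ?U = "pmf_of_set (distinct_lists m N)"
  have "map_pmf snd (map_pmf (\<lambda>\<omega>. (snd \<omega> ! t, fst \<omega> ! (snd \<omega> ! t))) \<mu>)
      = map_pmf snd (bind_pmf (map_pmf (\<lambda>\<pi>. \<pi> ! t) ?U)
          (\<lambda>i. map_pmf (Pair i) (map_pmf (\<lambda>S. S ! i) (replicate_pmf m p))))"
    using map_pmf_\<mu>_eq_bind[of "\<lambda>\<pi>. \<pi> ! t" "\<lambda>i S. S ! i"] by simp
  then have "map_pmf (clean_at t) \<mu>
      = bind_pmf (map_pmf (\<lambda>\<pi>. \<pi> ! t) ?U) (\<lambda>i. map_pmf (\<lambda>S. S ! i) (replicate_pmf m p))"
    by (simp add: map_pmf_comp map_bind_pmf clean_at_def[abs_def])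
  also have "\<dots> = bind_pmf (map_pmf (\<lambda>\<pi>. \<pi> ! t) ?U) (\<lambda>i. p)"
  proof (intro bind_pmf_cong refl map_pmf_nth_replicate_pmf)
    fix i assume "i \<in> set_pmf (map_pmf (\<lambda>\<pi>. \<pi> ! t) ?U)"
    then show "i < m" using assms N_le_m by (auto simp: mem_distinct_lists dest!: nth_mem)
  qed
  finally show ?thesis by (simp add: bind_pmf_const)
qed

lemma map_pmf_\<mu>_prefix_later:
  assumes "s \<le> s'" "s' < N"
  shows "map_pmf (\<lambda>\<omega>. \<Phi> (fst \<omega>) (take s (snd \<omega>)) (snd \<omega> ! s')) \<mu>
       = map_pmf (\<lambda>\<omega>. \<Phi> (fst \<omega>) (take s (snd \<omega>)) (snd \<omega> ! s)) \<mu>"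
proof -
  have "map_pmf (\<lambda>\<omega>. \<Phi> (fst \<omega>) (take s (snd \<omega>)) (snd \<omega> ! j)) \<mu>
      = map_pmf (\<lambda>(S, c). \<Phi> S (fst c) (snd c))
          (pair_pmf (replicate_pmf m p) (map_pmf (\<lambda>\<pi>. (take s \<pi>, \<pi> ! j)) (pmf_of_set (distinct_lists m N))))"
    for j
    unfolding \<mu>_def pair_map_pmf2 map_pmf_comp by (simp add: split_beta)
  then show ?thesis using map_pmf_prefix_later_distinct_lists[OF assms N_le_m] by simp
qed

lemma map_pmf_hist_corrupt_at_later:
  "s \<le> s' \<Longrightarrow> s' < N \<Longrightarrow>
   map_pmf (\<lambda>\<omega>. (hist s \<omega>, corrupt_at s' \<omega>)) \<mu> = map_pmf (\<lambda>\<omega>. (hist s \<omega>, corrupt_at s \<omega>)) \<mu>"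
  using map_pmf_\<mu>_prefix_later[of s s' "\<lambda>S r i. ((r, seen r S), adv S ! i)"]
  unfolding hist_def corrupt_at_def by simp

lemma next_entropy_Suc_le:
  assumes "Suc s < N"
  shows "next_entropy (Suc s) \<le> next_entropy s"
proof -
  define \<phi> where "\<phi> = (\<lambda>(r :: nat list, v :: 'z list). (take s r, take s v))"
  have \<phi>_hist: "\<phi> (hist (Suc s) \<omega>) = hist s \<omega>" for \<omega>
    unfolding \<phi>_def hist_def seen_def by (simp add: take_map min_def)
  have "next_entropy (Suc s) \<le> cond_entropy_pmf \<mu> (corrupt_at (Suc s)) (\<lambda>\<omega>. \<phi> (hist (Suc s) \<omega>))"
    unfolding next_entropy_def by (rule cond_entropy_pmf_le_coarser[OF finite_set_pmf_\<mu>])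
  also have "\<dots> = next_entropy s"
    using map_pmf_hist_corrupt_at_later[of s "Suc s"] assms
    by (simp add: \<phi>_hist next_entropy_def cond_entropy_pmf_def)
  finally show ?thesis .
qed

lemma next_entropy_antimono: "a \<le> b \<Longrightarrow> b < N \<Longrightarrow> next_entropy b \<le> next_entropy a"
proof (induction b rule: dec_induct)
  case (step b)
  then show ?case using next_entropy_Suc_le[of b] by simp
qed simp

lemma next_entropy_nonneg: "0 \<le> next_entropy s"
  unfolding next_entropy_def by (rule cond_entropy_pmf_nonneg[OF finite_set_pmf_\<mu>])

lemma next_entropy_le_ln_card:
  assumes "s < N"
  shows "next_entropy s \<le> ln (card Z)"
proof -
  have "entropy_pmf (map_pmf (corrupt_at s) \<mu>) \<le> ln (card Z)"
    using assms by (intro entropy_pmf_le_ln_card[OF finite_Z]) (auto simp: corrupt_at_in_Z)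
  then show ?thesis
    using entropy_pmf_pair_le[OF finite_set_pmf_\<mu>, of "hist s" "corrupt_at s"]
    unfolding next_entropy_def cond_entropy_pmf_def by simp
qed

text \<open>Pigeonhole: the drops over the \<open>L\<close> blocks telescope to at most \<open>ln |Z|\<close>.\<close>

lemma exists_block_small_entropy_drop:
  assumes L: "0 < L" and LN: "L * n < N"
  obtains j where "j < L" "next_entropy (j * n) - next_entropy (j * n + n) \<le> ln (card Z) / L"
proof (rule ccontr)
  assume "\<not> thesis"
  with that have gt: "ln (card Z) / L < next_entropy (j * n) - next_entropy (j * n + n)" if "j < L" for j
    using that by fastforce
  have "(\<Sum>j<L. ln (card Z) / L) < (\<Sum>j<L. next_entropy (j * n) - next_entropy (Suc j * n))"
    using L gt by (intro sum_strict_mono) (auto simp: add.commute)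
  also have "\<dots> = next_entropy 0 - next_entropy (L * n)"
    using sum_lessThan_telescope'[of "\<lambda>j. next_entropy (j * n)" L] by simp
  also have "\<dots> \<le> ln (card Z)"
    using next_entropy_le_ln_card[of 0] next_entropy_nonneg[of "L * n"] LN by simp
  finally show False using L by simp
qed

subsection \<open>A window of corrupted examples is nearly conditionally i.i.d.\<close>

lemma window_nth:
  "\<omega> \<in> set_pmf \<mu> \<Longrightarrow> l < n \<Longrightarrow> t + n \<le> N \<Longrightarrow> window t n \<omega> ! l = corrupt_at (t + l) \<omega>"
  using set_pmf_\<mu>_D(4)[of \<omega>] unfolding window_def corrupt_at_def seen_def by simp

lemma entropy_hist_window_ge:
  assumes tn: "t + n < N"
  shows "n * next_entropy (t + n)
       \<le> entropy_pmf (map_pmf (\<lambda>\<omega>. (hist t \<omega>, window t n \<omega>)) \<mu>) - entropy_pmf (map_pmf (hist t) \<mu>)"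
proof -
  define E where "E l = entropy_pmf (map_pmf (\<lambda>\<omega>. (hist t \<omega>, take l (window t n \<omega>))) \<mu>)" for l
  have E0: "E 0 = entropy_pmf (map_pmf (hist t) \<mu>)"
    unfolding E_def by (rule entropy_pmf_map_cong_inj[where h = "\<lambda>g. (g, [])"]) (auto simp: inj_on_def)
  have En: "E n = entropy_pmf (map_pmf (\<lambda>\<omega>. (hist t \<omega>, window t n \<omega>)) \<mu>)"
    unfolding E_def window_def seen_def by simp
  have step: "next_entropy (t + n) \<le> E (Suc l) - E l" if l: "l < n" for l
  proof -
    define \<phi> where "\<phi> = (\<lambda>(r :: nat list, v :: 'z list). ((take t r, take t v), drop t v))"
    have \<phi>_hist: "\<phi> (hist (t + l) \<omega>) = (hist t \<omega>, take l (window t n \<omega>))" for \<omega>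
      using l unfolding \<phi>_def hist_def window_def seen_def
      by (simp add: take_map drop_map min_def take_drop add.commute)
    have "E (Suc l) = entropy_pmf (map_pmf (\<lambda>\<omega>. (\<phi> (hist (t + l) \<omega>), corrupt_at (t + l) \<omega>)) \<mu>)"
      unfolding E_def \<phi>_hist
    proof (rule entropy_pmf_map_cong_inj[where h = "\<lambda>((g, ys), y). (g, ys @ [y])"])
      fix \<omega> assume \<omega>: "\<omega> \<in> set_pmf \<mu>"
      then have "length (window t n \<omega>) = n"
        using set_pmf_\<mu>_D(4)[OF \<omega>] tn unfolding window_def seen_def by simp
      then show "(hist t \<omega>, take (Suc l) (window t n \<omega>))
          = (\<lambda>((g, ys), y). (g, ys @ [y])) ((hist t \<omega>, take l (window t n \<omega>)), corrupt_at (t + l) \<omega>)"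
        using l window_nth[OF \<omega> l] tn by (simp add: take_Suc_conv_app_nth)
    qed (auto simp: inj_on_def)
    moreover have "E l = entropy_pmf (map_pmf (\<lambda>\<omega>. \<phi> (hist (t + l) \<omega>)) \<mu>)"
      unfolding E_def \<phi>_hist ..
    ultimately have "next_entropy (t + l) \<le> E (Suc l) - E l"
      using cond_entropy_pmf_le_coarser[OF finite_set_pmf_\<mu>, of "corrupt_at (t + l)" "hist (t + l)" \<phi>]
      by (simp add: next_entropy_def cond_entropy_pmf_def)
    moreover have "next_entropy (t + n) \<le> next_entropy (t + l)"
      using l tn by (intro next_entropy_antimono) auto
    ultimately show ?thesis by simp
  qed
  have "n * next_entropy (t + n) \<le> (\<Sum>l<n. E (Suc l) - E l)"
    using sum_mono[of "{..<n}" "\<lambda>_. next_entropy (t + n)" "\<lambda>l. E (Suc l) - E l"] step by simp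
  also have "\<dots> = E n - E 0" by (rule sum_lessThan_telescope)
  finally show ?thesis unfolding E0 En .
qed

lemma KL_window_le:
  assumes tn: "t + n < N"
  defines "\<nu> \<equiv> map_pmf (\<lambda>\<omega>. (hist t \<omega>, window t n \<omega>)) \<mu>"
    and "\<nu>' \<equiv> bind_pmf (map_pmf (hist t) \<mu>) (\<lambda>\<gamma>. map_pmf (Pair \<gamma>) (replicate_pmf n (corrupt_law t \<gamma>)))"
  shows "set_pmf \<nu> \<subseteq> set_pmf \<nu>'" "KL_pmf \<nu> \<nu>' \<le> n * (next_entropy t - next_entropy (t + n))"
proof -
  let ?\<rho> = "map_pmf (\<lambda>\<omega>. (hist t \<omega>, corrupt_at t \<omega>)) \<mu>"
  have marg: "map_pmf (\<lambda>z. (fst z, snd z ! l)) \<nu> = ?\<rho>" if l: "l < n" for l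
  proof -
    have "map_pmf (\<lambda>z. (fst z, snd z ! l)) \<nu> = map_pmf (\<lambda>\<omega>. (hist t \<omega>, corrupt_at (t + l) \<omega>)) \<mu>"
      unfolding \<nu>_def map_pmf_comp using window_nth l tn by (intro map_pmf_cong) auto
    then show ?thesis using map_pmf_hist_corrupt_at_later[of t "t + l"] l tn by simp
  qed
  have len: "length (snd z) = n" if "z \<in> set_pmf \<nu>" for z
    using that set_pmf_\<mu>_D(4) tn unfolding \<nu>_def window_def seen_def by auto
  have fin: "finite (set_pmf \<nu>)" unfolding \<nu>_def using finite_set_pmf_\<mu> by simp
  have marg1: "map_pmf fst \<nu> = map_pmf (hist t) \<mu>" unfolding \<nu>_def by (simp add: map_pmf_comp)
  have kernel: "?\<rho> = bind_pmf (map_pmf (hist t) \<mu>) (\<lambda>\<gamma>. map_pmf (Pair \<gamma>) (corrupt_law t \<gamma>))"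
    unfolding corrupt_law_def by (rule map_pmf_pair_eq_bind_cond_value_pmf)
  note KL = KL_pmf_bind_replicate_pmf[OF fin len marg marg1 kernel, folded \<nu>'_def]
  show "set_pmf \<nu> \<subseteq> set_pmf \<nu>'" by (rule KL(1))
  have "KL_pmf \<nu> \<nu>' = n * next_entropy t + entropy_pmf (map_pmf (hist t) \<mu>) - entropy_pmf \<nu>"
    using KL(2) by (simp add: next_entropy_def cond_entropy_pmf_def)
  then show "KL_pmf \<nu> \<nu>' \<le> n * (next_entropy t - next_entropy (t + n))"
    using entropy_hist_window_ge[OF tn] unfolding \<nu>_def by (simp add: algebra_simps)
qed

subsection \<open>The history carries little information about the next clean example\<close>

lemma expectation_prefix_next:
  fixes f :: "nat list \<times> nat \<Rightarrow> real"
  assumes "t < N"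
  shows "measure_pmf.expectation (map_pmf (\<lambda>\<pi>. (take t \<pi>, \<pi> ! t)) (pmf_of_set (distinct_lists m N))) f
       = measure_pmf.expectation (pmf_of_set (distinct_lists m t))
           (\<lambda>r. measure_pmf.expectation (pmf_of_set ({..<m} - set r)) (\<lambda>i. f (r, i)))"
proof -
  have tm: "t < m" using assms N_le_m by simp
  have "finite (set_pmf (map_pmf (Pair r) (pmf_of_set ({..<m} - set r))))" if "r \<in> distinct_lists m t" for r
    using unused_positions_nonempty[OF that tm] by simp
  then show ?thesis
    unfolding map_pmf_prefix_next_distinct_lists[OF assms N_le_m]
    using tm by (subst expectation_bind_pmf_finite) (auto simp: finite_distinct_lists)
qed

lemma entropy_seen_le:
  assumes "r \<in> distinct_lists m t"
  shows "entropy_pmf (map_pmf (seen r) (replicate_pmf m p)) \<le> t * ln (card Z)"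
proof -
  have "entropy_pmf (map_pmf (seen r) (replicate_pmf m p)) \<le> ln (card {xs. set xs \<subseteq> Z \<and> length xs = t})"
  proof (rule entropy_pmf_le_ln_card)
    show "finite {xs. set xs \<subseteq> Z \<and> length xs = t}" using finite_Z by (rule finite_lists_length_eq)
    show "set_pmf (map_pmf (seen r) (replicate_pmf m p)) \<subseteq> {xs. set xs \<subseteq> Z \<and> length xs = t}"
      using assms adv by (fastforce simp: seen_def mem_distinct_lists)
  qed
  also have "\<dots> = t * ln (card Z)"
    using finite_Z by (simp add: card_lists_length_eq ln_realpow)
  finally show ?thesis .
qed

lemma average_info_unused_le:
  assumes r: "r \<in> distinct_lists m t" and tm: "t < m"
  shows "measure_pmf.expectation (pmf_of_set ({..<m} - set r))
           (\<lambda>i. mutual_info_pmf (replicate_pmf m p) (seen r) (\<lambda>S. S ! i)) \<le> t * ln (card Z) / (m - t)"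
proof -
  let ?J = "\<lambda>i. mutual_info_pmf (replicate_pmf m p) (seen r) (\<lambda>S. S ! i)"
  have "measure_pmf.expectation (pmf_of_set ({..<m} - set r)) ?J = (\<Sum>i\<in>{..<m} - set r. ?J i) / (m - t)"
    using unused_positions_nonempty[OF r tm] card_unused_positions[OF r]
    by (simp add: integral_pmf_of_set)
  also have "(\<Sum>i\<in>{..<m} - set r. ?J i) \<le> (\<Sum>i<m. ?J i)"
    by (rule sum_mono2) (auto intro: mutual_info_pmf_nonneg finite_set_pmf_sample)
  also have "\<dots> \<le> entropy_pmf (map_pmf (seen r) (replicate_pmf m p))"
    by (rule sum_mutual_info_nth_replicate_pmf_le[OF finite_set_pmf_p])
  also have "\<dots> \<le> t * ln (card Z)" by (rule entropy_seen_le[OF r])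
  finally show ?thesis using tm by (simp add: divide_right_mono)
qed

lemma entropy_map_pmf_\<mu>_prefix_next:
  fixes t :: nat and F :: "nat list \<times> nat \<Rightarrow> 'z list \<Rightarrow> 'w"
  defines "P \<equiv> map_pmf (\<lambda>\<pi>. (take t \<pi>, \<pi> ! t)) (pmf_of_set (distinct_lists m N))"
  shows "entropy_pmf (map_pmf (\<lambda>\<omega>. ((take t (snd \<omega>), snd \<omega> ! t), F (take t (snd \<omega>), snd \<omega> ! t) (fst \<omega>))) \<mu>)
       = entropy_pmf P + (\<Sum>c\<in>set_pmf P. pmf P c * entropy_pmf (map_pmf (F c) (replicate_pmf m p)))"
proof -
  have "finite (set_pmf P)" unfolding P_def using N_le_m by (simp add: finite_distinct_lists)
  then show ?thesis
    using map_pmf_\<mu>_eq_bind[of "\<lambda>\<pi>. (take t \<pi>, \<pi> ! t)" F]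
    by (simp add: P_def entropy_pmf_bind_Pair finite_set_pmf_sample)
qed

lemma expectation_mutual_info_prefix_next:
  fixes t :: nat
  assumes tN: "t < N"
  defines "P \<equiv> map_pmf (\<lambda>\<pi>. (take t \<pi>, \<pi> ! t)) (pmf_of_set (distinct_lists m N))"
  shows "measure_pmf.expectation P (\<lambda>c. mutual_info_pmf (replicate_pmf m p) (seen (fst c)) (\<lambda>S. S ! snd c))
       = (\<Sum>c\<in>set_pmf P. pmf P c * entropy_pmf (map_pmf (seen (fst c)) (replicate_pmf m p))) + entropy_pmf p
         - (\<Sum>c\<in>set_pmf P. pmf P c * entropy_pmf (map_pmf (\<lambda>S. (seen (fst c) S, S ! snd c)) (replicate_pmf m p)))"
proof -
  let ?H = "\<lambda>F. entropy_pmf (map_pmf F (replicate_pmf m p))"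
  have finP: "finite (set_pmf P)" unfolding P_def using N_le_m by (simp add: finite_distinct_lists)
  have pointwise: "mutual_info_pmf (replicate_pmf m p) (seen (fst c)) (\<lambda>S. S ! snd c)
      = ?H (seen (fst c)) + entropy_pmf p - ?H (\<lambda>S. (seen (fst c) S, S ! snd c))" if "c \<in> set_pmf P" for c
  proof -
    have "snd c < m" using that tN N_le_m by (auto simp: P_def mem_distinct_lists dest!: nth_mem)
    then show ?thesis by (simp add: mutual_info_pmf_def map_pmf_nth_replicate_pmf)
  qed
  have "measure_pmf.expectation P (\<lambda>c. mutual_info_pmf (replicate_pmf m p) (seen (fst c)) (\<lambda>S. S ! snd c))
      = (\<Sum>c\<in>set_pmf P. pmf P c * (?H (seen (fst c)) + entropy_pmf p - ?H (\<lambda>S. (seen (fst c) S, S ! snd c))))"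
    unfolding expectation_pmf_finite[OF finP] by (rule sum.cong[OF refl]) (simp only: pointwise)
  also have "\<dots> = (\<Sum>c\<in>set_pmf P. pmf P c * ?H (seen (fst c))) + (\<Sum>c\<in>set_pmf P. pmf P c) * entropy_pmf p
      - (\<Sum>c\<in>set_pmf P. pmf P c * ?H (\<lambda>S. (seen (fst c) S, S ! snd c)))"
    by (simp add: ring_distribs sum.distrib sum_subtractf sum_distrib_right)
  finally show ?thesis using sum_pmf_eq_1[OF finP subset_refl] by simp
qed

text \<open>Adding the next position \<open>\<pi>\<^sub>t\<close> to the history, the clean example there is
  a fixed coordinate of an independent sample.\<close>

lemma next_info_le_average:
  assumes tN: "t < N"
  shows "next_info t \<le> measure_pmf.expectation (map_pmf (\<lambda>\<pi>. (take t \<pi>, \<pi> ! t)) (pmf_of_set (distinct_lists m N)))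
           (\<lambda>c. mutual_info_pmf (replicate_pmf m p) (seen (fst c)) (\<lambda>S. S ! snd c))"
proof -
  have "entropy_pmf (map_pmf (\<lambda>\<omega>. (hist t \<omega>, snd \<omega> ! t, clean_at t \<omega>)) \<mu>) + entropy_pmf (map_pmf (hist t) \<mu>)
      \<le> entropy_pmf (map_pmf (\<lambda>\<omega>. (hist t \<omega>, snd \<omega> ! t)) \<mu>) + entropy_pmf (map_pmf (\<lambda>\<omega>. (hist t \<omega>, clean_at t \<omega>)) \<mu>)"
    by (rule entropy_pmf_submodular[OF finite_set_pmf_\<mu>])
  moreover have "entropy_pmf (map_pmf (\<lambda>\<omega>. (hist t \<omega>, snd \<omega> ! t)) \<mu>)
      = entropy_pmf (map_pmf (\<lambda>\<omega>. ((take t (snd \<omega>), snd \<omega> ! t), seen (take t (snd \<omega>)) (fst \<omega>))) \<mu>)"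
    by (rule entropy_pmf_map_cong_inj[where h = "\<lambda>((r, i), v). ((r, v), i)"]) (auto simp: inj_on_def hist_def)
  moreover have "entropy_pmf (map_pmf (\<lambda>\<omega>. (hist t \<omega>, snd \<omega> ! t, clean_at t \<omega>)) \<mu>)
      = entropy_pmf (map_pmf (\<lambda>\<omega>. ((take t (snd \<omega>), snd \<omega> ! t),
          seen (take t (snd \<omega>)) (fst \<omega>), fst \<omega> ! (snd \<omega> ! t))) \<mu>)"
    by (rule entropy_pmf_map_cong_inj[where h = "\<lambda>((r, i), v, x). ((r, v), i, x)"])
       (auto simp: inj_on_def hist_def clean_at_def)
  moreover have "next_info t = entropy_pmf (map_pmf (hist t) \<mu>) + entropy_pmf p
      - entropy_pmf (map_pmf (\<lambda>\<omega>. (hist t \<omega>, clean_at t \<omega>)) \<mu>)"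
    by (simp add: next_info_def mutual_info_pmf_def map_pmf_clean_at[OF tN])
  ultimately show ?thesis
    using entropy_map_pmf_\<mu>_prefix_next[of t "\<lambda>c. seen (fst c)"]
      entropy_map_pmf_\<mu>_prefix_next[of t "\<lambda>c S. (seen (fst c) S, S ! snd c)"]
      expectation_mutual_info_prefix_next[OF tN]
    by simp
qed

lemma next_info_le:
  assumes tN: "t < N"
  shows "next_info t \<le> t * ln (card Z) / (m - t)"
proof -
  have tm: "t < m" using tN N_le_m by simp
  have "next_info t \<le> measure_pmf.expectation (pmf_of_set (distinct_lists m t))
      (\<lambda>r. measure_pmf.expectation (pmf_of_set ({..<m} - set r))
        (\<lambda>i. mutual_info_pmf (replicate_pmf m p) (seen r) (\<lambda>S. S ! i)))"
    using next_info_le_average[OF tN] unfolding expectation_prefix_next[OF tN] by simp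
  also have "\<dots> \<le> measure_pmf.expectation (pmf_of_set (distinct_lists m t)) (\<lambda>r. t * ln (card Z) / (m - t))"
    using average_info_unused_le tm finite_distinct_lists
    by (intro integral_mono_AE) (auto simp: AE_measure_pmf_iff integrable_measure_pmf_finite)
  finally show ?thesis by simp
qed

lemma measure_\<mu>_prefix_next:
  assumes tN: "t < N"
  shows "measure_pmf.prob \<mu> {\<omega>. \<Phi> (take t (snd \<omega>), snd \<omega> ! t) (fst \<omega>)}
    = measure_pmf.expectation (pmf_of_set (distinct_lists m t)) (\<lambda>r.
        measure_pmf.expectation (pmf_of_set ({..<m} - set r))
          (\<lambda>i. measure_pmf.prob (replicate_pmf m p) {S. \<Phi> (r, i) S}))"
proof -
  let ?C = "\<lambda>\<pi> :: nat list. (take t \<pi>, \<pi> ! t)"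
  let ?P = "map_pmf ?C (pmf_of_set (distinct_lists m N))"
  have "measure_pmf.prob \<mu> {\<omega>. \<Phi> (?C (snd \<omega>)) (fst \<omega>)}
      = measure_pmf.prob (map_pmf (\<lambda>\<omega>. (?C (snd \<omega>), fst \<omega>)) \<mu>) {(c, S). \<Phi> c S}"
    by (simp add: vimage_def split_beta)
  also have "\<dots> = measure_pmf.prob (bind_pmf ?P (\<lambda>c. map_pmf (Pair c) (replicate_pmf m p))) {(c, S). \<Phi> c S}"
    using map_pmf_\<mu>_eq_bind[of ?C "\<lambda>c S. S"] by simp
  also have "\<dots> = measure_pmf.expectation ?P (\<lambda>c. measure_pmf.prob (replicate_pmf m p) {S. \<Phi> c S})"
    by (simp add: measure_bind_pmf vimage_def)
  also have "\<dots> = measure_pmf.expectation (pmf_of_set (distinct_lists m t)) (\<lambda>r.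
        measure_pmf.expectation (pmf_of_set ({..<m} - set r))
          (\<lambda>i. measure_pmf.prob (replicate_pmf m p) {S. \<Phi> (r, i) S}))"
    using expectation_prefix_next[OF tN, of "\<lambda>c. measure_pmf.prob (replicate_pmf m p) {S. \<Phi> c S}"] by simp
  finally show ?thesis .
qed

lemma expectation_unused_corrupted_le:
  assumes r: "r \<in> distinct_lists m t" and tm: "t < m"
  shows "measure_pmf.expectation (pmf_of_set ({..<m} - set r))
           (\<lambda>i. measure_pmf.prob (replicate_pmf m p) {S. P S \<and> S ! i \<noteq> adv S ! i})
       \<le> k / (m - t) * measure_pmf.prob (replicate_pmf m p) {S. P S}"
proof -
  have "(\<Sum>i\<in>{..<m} - set r. measure_pmf.prob (replicate_pmf m p) {S. P S \<and> S ! i \<noteq> adv S ! i})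
      \<le> k * measure_pmf.prob (replicate_pmf m p) {S. P S}"
  proof (rule sum_measure_pmf_le_card_bound)
    fix S assume "S \<in> set_pmf (replicate_pmf m p)"
    then have "card {i. i < m \<and> adv S ! i \<noteq> S ! i} \<le> k" using adv by blast
    then show "card {i \<in> {..<m} - set r. S ! i \<noteq> adv S ! i} \<le> k"
      by (rule order_trans[rotated]) (auto intro: card_mono)
  qed simp
  then show ?thesis
    using unused_positions_nonempty[OF r tm] card_unused_positions[OF r] tm
    by (simp add: integral_pmf_of_set divide_right_mono)
qed

text \<open>Given the history, the next position is uniform among the \<open>m - t\<close> unused ones, of
  which at most \<open>k\<close> are corrupted.\<close>

lemma prob_clean_ne_corrupt_le:
  assumes tN: "t < N" and \<gamma>: "\<gamma> \<in> set_pmf (map_pmf (hist t) \<mu>)"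
  shows "measure_pmf.prob (cond_value_pmf \<mu> (hist t) \<gamma>) {\<omega>. clean_at t \<omega> \<noteq> corrupt_at t \<omega>} \<le> k / (m - t)"
proof -
  have tm: "t < m" using tN N_le_m by simp
  let ?A = "replicate_pmf m p"
  let ?P = "\<lambda>r S. (r, seen r S) = \<gamma>"
  have "measure_pmf.prob \<mu> ({\<omega>. clean_at t \<omega> \<noteq> corrupt_at t \<omega>} \<inter> {\<omega>. hist t \<omega> = \<gamma>})
      = measure_pmf.expectation (pmf_of_set (distinct_lists m t)) (\<lambda>r.
          measure_pmf.expectation (pmf_of_set ({..<m} - set r))
            (\<lambda>i. measure_pmf.prob ?A {S. ?P r S \<and> S ! i \<noteq> adv S ! i}))"
    using measure_\<mu>_prefix_next[OF tN, of "\<lambda>(r, i) S. ?P r S \<and> S ! i \<noteq> adv S ! i"]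
    by (simp add: clean_at_def corrupt_at_def hist_def Int_def conj_commute)
  also have "\<dots> \<le> measure_pmf.expectation (pmf_of_set (distinct_lists m t))
          (\<lambda>r. k / (m - t) * measure_pmf.prob ?A {S. ?P r S})"
    using expectation_unused_corrupted_le tm finite_distinct_lists
    by (intro integral_mono_AE) (auto simp: AE_measure_pmf_iff integrable_measure_pmf_finite)
  also have "\<dots> = k / (m - t) * measure_pmf.prob \<mu> {\<omega>. hist t \<omega> = \<gamma>}"
    using measure_\<mu>_prefix_next[OF tN, of "\<lambda>(r, i) S. ?P r S"] by (simp add: hist_def)
  finally have "measure_pmf.prob \<mu> ({\<omega>. clean_at t \<omega> \<noteq> corrupt_at t \<omega>} \<inter> {\<omega>. hist t \<omega> = \<gamma>})
      \<le> k / (m - t) * measure_pmf.prob \<mu> {\<omega>. hist t \<omega> = \<gamma>}" .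
  moreover have "0 < measure_pmf.prob \<mu> {\<omega>. hist t \<omega> = \<gamma>}"
    using \<gamma> by (auto intro: measure_pmf_posI)
  ultimately show ?thesis
    unfolding measure_cond_value_pmf[OF \<gamma>] by (simp add: divide_le_eq)
qed

lemma expectation_tv_dist_clean_law_le:
  assumes tN: "t < N"
  shows "measure_pmf.expectation (map_pmf (hist t) \<mu>) (\<lambda>\<gamma>. tv_dist p (clean_law t \<gamma>)) \<le> sqrt (next_info t)"
proof -
  let ?\<rho> = "map_pmf (hist t) \<mu>"
  have \<sigma>: "map_pmf (\<lambda>\<omega>. (hist t \<omega>, clean_at t \<omega>)) \<mu> = bind_pmf ?\<rho> (\<lambda>\<gamma>. map_pmf (Pair \<gamma>) (clean_law t \<gamma>))"
    unfolding clean_law_def by (rule map_pmf_pair_eq_bind_cond_value_pmf)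
  have marginal: "map_pmf snd (bind_pmf ?\<rho> (\<lambda>\<gamma>. map_pmf (Pair \<gamma>) (clean_law t \<gamma>))) = p"
    unfolding \<sigma>[symmetric] using map_pmf_clean_at[OF tN] by (simp add: map_pmf_comp)
  have "next_info t = mutual_info_pmf (bind_pmf ?\<rho> (\<lambda>\<gamma>. map_pmf (Pair \<gamma>) (clean_law t \<gamma>))) fst snd"
    unfolding \<sigma>[symmetric] next_info_def by (rule mutual_info_pmf_eq_map)
  moreover have "finite (set_pmf (clean_law t \<gamma>))" if "\<gamma> \<in> set_pmf ?\<rho>" for \<gamma>
    using finite_set_cond_value_pmf[OF finite_set_pmf_\<mu> that] by (simp add: clean_law_def)
  ultimately show ?thesis
    using expectation_tv_dist_le_mutual_info[OF _ _ finite_set_pmf_p marginal] finite_set_pmf_\<mu> by simp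
qed

lemma tv_dist_corrupt_law_le:
  fixes \<eta> :: real
  assumes k\<eta>: "real k \<le> \<eta> * m" and \<eta>0: "0 \<le> \<eta>" and tN: "t < N"
    and \<gamma>: "\<gamma> \<in> set_pmf (map_pmf (hist t) \<mu>)"
  shows "max 0 (tv_dist p (corrupt_law t \<gamma>) - \<eta>) \<le> tv_dist p (clean_law t \<gamma>) + t / (m - t)"
proof -
  have tm: "t < m" using tN N_le_m by simp
  define e where "e = measure_pmf.prob (cond_value_pmf \<mu> (hist t) \<gamma>) {\<omega>. clean_at t \<omega> \<noteq> corrupt_at t \<omega>}"
  have "tv_dist p (corrupt_law t \<gamma>) \<le> tv_dist p (clean_law t \<gamma>) + tv_dist (clean_law t \<gamma>) (corrupt_law t \<gamma>)"
    by (rule tv_dist_triangle)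
  also have "tv_dist (clean_law t \<gamma>) (corrupt_law t \<gamma>) \<le> e"
    unfolding clean_law_def corrupt_law_def e_def by (rule tv_dist_map_pmf_le)
  finally have tv: "tv_dist p (corrupt_law t \<gamma>) \<le> tv_dist p (clean_law t \<gamma>) + e" by simp
  have "e - \<eta> \<le> t / (m - t)"
  proof (cases "\<eta> \<ge> 1")
    case True
    have "e \<le> 1" by (simp add: e_def)
    with True have "e - \<eta> \<le> 0" by linarith
    also have "0 \<le> real t / real (m - t)" by simp
    finally show ?thesis .
  next
    case False
    have "e \<le> k / (m - t)" unfolding e_def by (rule prob_clean_ne_corrupt_le[OF tN \<gamma>])
    also have "\<dots> \<le> \<eta> * m / (m - t)" using k\<eta> tm by (simp add: divide_right_mono)
    also have "\<eta> * m / (m - t) = \<eta> + \<eta> * t / (m - t)" using tm by (simp add: field_simps of_nat_diff)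
    also have "\<eta> * t / (m - t) \<le> t / (m - t)"
      using False \<eta>0 tm by (intro divide_right_mono) (auto simp: mult_left_le_one_le)
    finally show ?thesis by simp
  qed
  then show ?thesis using tv tv_dist_nonneg[of p "clean_law t \<gamma>"] by simp
qed

lemma expectation_replicate_corrupt_law_ge:
  fixes g :: "'z list \<Rightarrow> real" and \<eta> \<delta> :: real
  assumes robust: "\<And>D'. set_pmf D' \<subseteq> Z \<Longrightarrow> tv_dist p D' \<le> \<eta> \<Longrightarrow> 1 - \<delta> \<le> measure_pmf.expectation (replicate_pmf n D') g"
    and g0: "\<And>y. 0 \<le> g y" and g1: "\<And>y. g y \<le> 1"
    and k\<eta>: "real k \<le> \<eta> * m" and \<eta>0: "0 \<le> \<eta>" and tN: "t < N"
    and \<gamma>: "\<gamma> \<in> set_pmf (map_pmf (hist t) \<mu>)"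
  shows "1 - \<delta> - n * (tv_dist p (clean_law t \<gamma>) + t / (m - t))
       \<le> measure_pmf.expectation (replicate_pmf n (corrupt_law t \<gamma>)) g"
proof -
  have "set_pmf (corrupt_law t \<gamma>) \<subseteq> Z"
    unfolding corrupt_law_def using set_cond_value_pmf[OF \<gamma>] corrupt_at_in_Z tN by auto
  then have "1 - \<delta> - n * max 0 (tv_dist p (corrupt_law t \<gamma>) - \<eta>)
      \<le> measure_pmf.expectation (replicate_pmf n (corrupt_law t \<gamma>)) g"
    using finite_set_cond_value_pmf[OF finite_set_pmf_\<mu> \<gamma>]
    by (intro expectation_replicate_pmf_ge_tv_robust[OF robust g0 g1 \<eta>0 finite_set_pmf_p _ set_pmf_p])
       (auto simp: corrupt_law_def)
  moreover have "n * max 0 (tv_dist p (corrupt_law t \<gamma>) - \<eta>) \<le> n * (tv_dist p (clean_law t \<gamma>) + t / (m - t))"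
    using tv_dist_corrupt_law_le[OF k\<eta> \<eta>0 tN \<gamma>] by (intro mult_left_mono) auto
  ultimately show ?thesis by linarith
qed
lemma expectation_window_close:
  fixes g :: "'z list \<Rightarrow> real"
  assumes g0: "\<And>y. 0 \<le> g y" and g1: "\<And>y. g y \<le> 1" and tn: "t + n < N"
  shows "measure_pmf.expectation (map_pmf (hist t) \<mu>) (\<lambda>\<gamma>. measure_pmf.expectation (replicate_pmf n (corrupt_law t \<gamma>)) g)
      - measure_pmf.expectation \<mu> (\<lambda>\<omega>. g (window t n \<omega>)) \<le> sqrt (n * (next_entropy t - next_entropy (t + n)))"
proof -
  let ?\<rho> = "map_pmf (hist t) \<mu>"
  let ?q = "\<lambda>\<gamma>. replicate_pmf n (corrupt_law t \<gamma>)"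
  define \<nu> where "\<nu> = map_pmf (\<lambda>\<omega>. (hist t \<omega>, window t n \<omega>)) \<mu>"
  define \<nu>' where "\<nu>' = bind_pmf ?\<rho> (\<lambda>\<gamma>. map_pmf (Pair \<gamma>) (?q \<gamma>))"
  have fin\<rho>: "finite (set_pmf ?\<rho>)" using finite_set_pmf_\<mu> by simp
  have fin_q: "finite (set_pmf (?q \<gamma>))" if "\<gamma> \<in> set_pmf ?\<rho>" for \<gamma>
    using finite_set_cond_value_pmf[OF finite_set_pmf_\<mu> that]
    by (simp add: corrupt_law_def finite_set_replicate_pmf)
  have fin\<nu>': "finite (set_pmf \<nu>')"
    unfolding \<nu>'_def set_bind_pmf_Pair using fin\<rho> fin_q by auto
  have "measure_pmf.expectation \<nu>' (\<lambda>z. g (snd z))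
      = measure_pmf.expectation ?\<rho> (\<lambda>\<gamma>. measure_pmf.expectation (?q \<gamma>) g)"
    unfolding \<nu>'_def using fin\<rho> fin_q by (subst expectation_bind_pmf_finite) auto
  moreover have "measure_pmf.expectation \<nu> (\<lambda>z. g (snd z)) = measure_pmf.expectation \<mu> (\<lambda>\<omega>. g (window t n \<omega>))"
    by (simp add: \<nu>_def)
  moreover have "measure_pmf.expectation \<nu>' (\<lambda>z. g (snd z)) - measure_pmf.expectation \<nu> (\<lambda>z. g (snd z))
      \<le> sqrt (KL_pmf \<nu> \<nu>')"
    using abs_expectation_diff_le_KL_pmf[OF fin\<nu>' KL_window_le(1)[OF tn, folded \<nu>_def \<nu>'_def], of "\<lambda>z. g (snd z)"]
      g0 g1 by (simp add: abs_le_iff)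
  moreover have "sqrt (KL_pmf \<nu> \<nu>') \<le> sqrt (n * (next_entropy t - next_entropy (t + n)))"
    using KL_window_le(2)[OF tn, folded \<nu>_def \<nu>'_def] by simp
  ultimately show ?thesis by linarith
qed

lemma expectation_replicate_corrupt_law_average_ge:
  fixes g :: "'z list \<Rightarrow> real" and \<eta> \<delta> :: real
  assumes robust: "\<And>D'. set_pmf D' \<subseteq> Z \<Longrightarrow> tv_dist p D' \<le> \<eta> \<Longrightarrow> 1 - \<delta> \<le> measure_pmf.expectation (replicate_pmf n D') g"
    and g0: "\<And>y. 0 \<le> g y" and g1: "\<And>y. g y \<le> 1"
    and k\<eta>: "real k \<le> \<eta> * m" and \<eta>0: "0 \<le> \<eta>" and tN: "t < N"
  shows "1 - \<delta> - (n * sqrt (next_info t) + n * (t / (m - t)))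
       \<le> measure_pmf.expectation (map_pmf (hist t) \<mu>) (\<lambda>\<gamma>. measure_pmf.expectation (replicate_pmf n (corrupt_law t \<gamma>)) g)"
proof -
  let ?\<rho> = "map_pmf (hist t) \<mu>"
  let ?tv = "\<lambda>\<gamma>. tv_dist p (clean_law t \<gamma>)"
  define e where "e = n * (t / (m - t))"
  have fin\<rho>: "finite (set_pmf ?\<rho>)" using finite_set_pmf_\<mu> by simp
  have "measure_pmf.expectation ?\<rho> (\<lambda>\<gamma>. 1 - \<delta> - e - n * ?tv \<gamma>)
      \<le> measure_pmf.expectation ?\<rho> (\<lambda>\<gamma>. measure_pmf.expectation (replicate_pmf n (corrupt_law t \<gamma>)) g)"
  proof (rule integral_mono_AE)
    show "AE \<gamma> in measure_pmf ?\<rho>. 1 - \<delta> - e - n * ?tv \<gamma>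
        \<le> measure_pmf.expectation (replicate_pmf n (corrupt_law t \<gamma>)) g"
    proof (rule AE_pmfI)
      fix \<gamma> assume "\<gamma> \<in> set_pmf ?\<rho>"
      from expectation_replicate_corrupt_law_ge[OF robust g0 g1 k\<eta> \<eta>0 tN this]
      show "1 - \<delta> - e - n * ?tv \<gamma> \<le> measure_pmf.expectation (replicate_pmf n (corrupt_law t \<gamma>)) g"
        by (simp add: e_def algebra_simps)
    qed
  qed (rule integrable_measure_pmf_finite[OF fin\<rho>])+
  moreover have "measure_pmf.expectation ?\<rho> (\<lambda>\<gamma>. 1 - \<delta> - e - n * ?tv \<gamma>)
      = measure_pmf.expectation ?\<rho> (\<lambda>\<gamma>. 1 - \<delta> - e) - measure_pmf.expectation ?\<rho> (\<lambda>\<gamma>. n * ?tv \<gamma>)"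
    by (rule Bochner_Integration.integral_diff) (rule integrable_measure_pmf_finite[OF fin\<rho>])+
  moreover have "measure_pmf.expectation ?\<rho> (\<lambda>\<gamma>. n * ?tv \<gamma>) = n * measure_pmf.expectation ?\<rho> ?tv"
    by (rule integral_mult_right_zero)
  moreover have "measure_pmf.expectation ?\<rho> (\<lambda>\<gamma>. 1 - \<delta> - e) = 1 - \<delta> - e" by simp
  moreover have "n * measure_pmf.expectation ?\<rho> ?tv \<le> n * sqrt (next_info t)"
    using expectation_tv_dist_clean_law_le[OF tN] by (intro mult_left_mono) auto
  ultimately show ?thesis unfolding e_def[symmetric] by linarith
qed

lemma expectation_window_ge:
  fixes g :: "'z list \<Rightarrow> real" and \<eta> \<delta> :: real
  assumes robust: "\<And>D'. set_pmf D' \<subseteq> Z \<Longrightarrow> tv_dist p D' \<le> \<eta> \<Longrightarrow> 1 - \<delta> \<le> measure_pmf.expectation (replicate_pmf n D') g"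
    and g0: "\<And>y. 0 \<le> g y" and g1: "\<And>y. g y \<le> 1"
    and k\<eta>: "real k \<le> \<eta> * m" and \<eta>0: "0 \<le> \<eta>" and tn: "t + n < N"
  shows "1 - \<delta> - (sqrt (n * (next_entropy t - next_entropy (t + n))) + n * sqrt (next_info t) + n * (t / (m - t)))
       \<le> measure_pmf.expectation \<mu> (\<lambda>\<omega>. g (window t n \<omega>))"
proof -
  have combine: "c - (x + y) \<le> a \<Longrightarrow> a - b \<le> s \<Longrightarrow> c - (s + x + y) \<le> b" for a b c s x y :: real
    by linarith
  from tn have "t < N" by simp
  from expectation_replicate_corrupt_law_average_ge[OF robust g0 g1 k\<eta> \<eta>0 this]
    expectation_window_close[of g, OF g0 g1 tn]
  show ?thesis by (rule combine)
qed

lemma expectation_window_eq_subsample: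
  fixes g :: "'z list \<Rightarrow> real"
  assumes "t + n \<le> N"
  shows "measure_pmf.expectation \<mu> (\<lambda>\<omega>. g (window t n \<omega>))
       = measure_pmf.expectation (replicate_pmf m p) (\<lambda>S. measure_pmf.expectation (subsample n (adv S)) g)"
proof -
  have "measure_pmf.expectation \<mu> (\<lambda>\<omega>. g (window t n \<omega>))
      = measure_pmf.expectation (replicate_pmf m p)
          (\<lambda>S. measure_pmf.expectation (map_pmf (Pair S) (pmf_of_set (distinct_lists m N))) (\<lambda>\<omega>. g (window t n \<omega>)))"
    unfolding \<mu>_def pair_pmf_eq_bind_pmf
    using finite_set_pmf_sample N_le_m by (subst expectation_bind_pmf_finite) (auto simp: finite_distinct_lists)
  also have "\<dots> = measure_pmf.expectation (replicate_pmf m p) (\<lambda>S. measure_pmf.expectation (subsample n (adv S)) g)"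
  proof (rule integral_cong_AE)
    show "AE S in measure_pmf (replicate_pmf m p).
        measure_pmf.expectation (map_pmf (Pair S) (pmf_of_set (distinct_lists m N))) (\<lambda>\<omega>. g (window t n \<omega>))
        = measure_pmf.expectation (subsample n (adv S)) g"
    proof (rule AE_pmfI)
      fix S assume "S \<in> set_pmf (replicate_pmf m p)"
      then have "length (adv S) = m" using adv by blast
      then have "subsample n (adv S)
          = map_pmf (\<lambda>r. seen r S) (map_pmf (\<lambda>\<pi>. take n (drop t \<pi>)) (pmf_of_set (distinct_lists m N)))"
        using map_pmf_window_distinct_lists[OF assms N_le_m]
        by (simp add: subsample_eq_distinct_lists seen_def)
      then show "measure_pmf.expectation (map_pmf (Pair S) (pmf_of_set (distinct_lists m N))) (\<lambda>\<omega>. g (window t n \<omega>))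
          = measure_pmf.expectation (subsample n (adv S)) g"
        by (simp add: window_def)
    qed
  qed simp_all
  finally show ?thesis .
qed

end

section \<open>Choosing the block length\<close>

lemma block_threshold_bounds:
  fixes n \<Lambda> d m :: real
  assumes n1: "1 \<le> n" and \<Lambda>: "1/2 \<le> \<Lambda>" and d0: "0 < d" and d1: "d < 1"
    and mb: "1000 * n^4 * \<Lambda>^2 / d^4 \<le> m"
  shows "9 \<le> 18 * n^2 * \<Lambda> / d^2" "3 * (18 * n^2 * \<Lambda> / d^2) \<le> m"
proof -
  define T where "T = 18 * n^2 * \<Lambda> / d^2"
  have d2: "0 < d^2" "d^2 \<le> 1" using d0 d1 by (auto simp: power_le_one)
  have "18 * 1 * (1/2) \<le> 18 * n^2 * \<Lambda>" using n1 \<Lambda> by (intro mult_mono) (auto simp: one_le_power)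
  also have "\<dots> \<le> T" unfolding T_def using d2 \<Lambda> n1 by (simp add: le_divide_eq)
  finally show T9: "9 \<le> 18 * n^2 * \<Lambda> / d^2" unfolding T_def by simp
  have "T^2 = 324 * n^4 * \<Lambda>^2 / d^4"
    unfolding T_def by (simp add: power2_eq_square field_simps power4_eq_xxxx)
  then have "3 * T^2 \<le> 1000 * n^4 * \<Lambda>^2 / d^4" using d2 by (simp add: divide_right_mono)
  then have "3 * T^2 \<le> m" using mb by simp
  moreover have "T * 1 \<le> T * T" using T9 unfolding T_def by (intro mult_left_mono) auto
  ultimately show "3 * (18 * n^2 * \<Lambda> / d^2) \<le> m" unfolding T_def by (simp add: power2_eq_square)
qed

lemma entropy_term_le:
  fixes n \<Lambda> d L h :: real
  assumes n1: "1 \<le> n" and \<Lambda>: "1/2 \<le> \<Lambda>" and d0: "0 < d"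
    and Lb: "16 * n * \<Lambda> / d^2 \<le> L" and hb: "h \<le> \<Lambda> / L"
  shows "sqrt (n * h) \<le> d / 4"
proof -
  have \<Lambda>0: "0 < \<Lambda>" using \<Lambda> by simp
  have pos: "0 < 16 * n * \<Lambda> / d^2" using n1 \<Lambda>0 d0 by (intro divide_pos_pos mult_pos_pos) auto
  have L0: "0 < L" using Lb pos by linarith
  have "n * h \<le> n * (\<Lambda> / L)" using hb n1 by (intro mult_left_mono) auto
  also have "\<dots> \<le> n * (\<Lambda> / (16 * n * \<Lambda> / d^2))"
    using Lb n1 \<Lambda>0 mult_pos_pos[OF L0 pos] by (intro mult_left_mono divide_left_mono) simp_all
  also have "\<dots> = (d / 4)^2" using n1 \<Lambda>0 d0 by (simp add: field_simps power_divide)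
  finally have "sqrt (n * h) \<le> sqrt ((d / 4)^2)" by (rule real_sqrt_le_mono)
  then show ?thesis using d0 by simp
qed

lemma position_fraction_le:
  fixes n \<Lambda> d m t :: real
  assumes n1: "1 \<le> n" and \<Lambda>: "1/2 \<le> \<Lambda>" and d0: "0 < d" and d1: "d < 1"
    and mb: "1000 * n^4 * \<Lambda>^2 / d^4 \<le> m"
    and tb: "t \<le> 18 * n^2 * \<Lambda> / d^2" and t0: "0 \<le> t"
  shows "t / (m - t) \<le> 27 * (n^4 * \<Lambda>^2 / d^4) * d^2 / (m * n^2 * \<Lambda>)"
proof -
  define T where "T = 18 * n^2 * \<Lambda> / d^2"
  note T = block_threshold_bounds[OF n1 \<Lambda> d0 d1 mb, folded T_def]
  have m0: "0 < m" using T by simp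
  have mt: "2 * m / 3 \<le> m - t" "0 < m - t" using tb[folded T_def] T by linarith+
  have "t / (m - t) \<le> T / (2 * m / 3)" using tb t0 mt unfolding T_def by (intro frac_le) auto
  also have "\<dots> = 27 * (n^4 * \<Lambda>^2 / d^4) * d^2 / (m * n^2 * \<Lambda>)"
    unfolding T_def using m0 d0 n1 \<Lambda> by (simp add: field_simps power4_eq_xxxx power2_eq_square)
  finally show ?thesis .
qed

lemma info_term_le:
  fixes n \<Lambda> d m t I :: real
  assumes n1: "1 \<le> n" and \<Lambda>: "1/2 \<le> \<Lambda>" and d0: "0 < d" and d1: "d < 1"
    and mb: "1000 * n^4 * \<Lambda>^2 / d^4 \<le> m"
    and tb: "t \<le> 18 * n^2 * \<Lambda> / d^2" and t0: "0 \<le> t" and Ib: "I \<le> t * \<Lambda> / (m - t)"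
  shows "n * sqrt I \<le> d / 4"
proof -
  have m0: "0 < m" using block_threshold_bounds[OF n1 \<Lambda> d0 d1 mb] by simp
  have mb': "n^4 * \<Lambda>^2 / d^4 \<le> m / 1000" using mb by (simp add: field_simps mult.commute mult.left_commute)
  have "n^2 * I \<le> n^2 * (t / (m - t) * \<Lambda>)" using Ib by (intro mult_left_mono) auto
  also have "\<dots> \<le> n^2 * (27 * (n^4 * \<Lambda>^2 / d^4) * d^2 / (m * n^2 * \<Lambda>) * \<Lambda>)"
    using position_fraction_le[OF assms(1-7)] \<Lambda> by (intro mult_left_mono mult_right_mono) auto
  also have "\<dots> = 27 * (n^4 * \<Lambda>^2 / d^4) * d^2 / m" using n1 \<Lambda> by (simp add: field_simps)
  also have "\<dots> \<le> 27 * (m / 1000) * d^2 / m"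
    using mb' m0 by (intro divide_right_mono mult_right_mono mult_left_mono) auto
  also have "\<dots> \<le> (d / 4)^2" using m0 by (simp add: power_divide)
  finally have "sqrt (n^2 * I) \<le> sqrt ((d / 4)^2)" by (rule real_sqrt_le_mono)
  then show ?thesis using d0 n1 by (simp add: real_sqrt_mult)
qed

lemma position_term_le:
  fixes n \<Lambda> d m t :: real
  assumes n1: "1 \<le> n" and \<Lambda>: "1/2 \<le> \<Lambda>" and d0: "0 < d" and d1: "d < 1"
    and mb: "1000 * n^4 * \<Lambda>^2 / d^4 \<le> m"
    and tb: "t \<le> 18 * n^2 * \<Lambda> / d^2" and t0: "0 \<le> t"
  shows "n * (t / (m - t)) \<le> d / 4"
proof -
  have m0: "0 < m" using block_threshold_bounds[OF n1 \<Lambda> d0 d1 mb] by simp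
  have mb': "n^4 * \<Lambda>^2 / d^4 \<le> m / 1000" using mb by (simp add: field_simps mult.commute mult.left_commute)
  have "n * (t / (m - t)) \<le> n * (27 * (n^4 * \<Lambda>^2 / d^4) * d^2 / (m * n^2 * \<Lambda>))"
    using position_fraction_le[OF assms] n1 by (intro mult_left_mono) auto
  also have "\<dots> \<le> n * (27 * (m / 1000) * d^2 / (m * n^2 * \<Lambda>))"
    using mb' m0 n1 \<Lambda> by (intro mult_left_mono divide_right_mono mult_right_mono) auto
  also have "\<dots> = 27 / 1000 * d^2 / (n * \<Lambda>)" using m0 n1 by (simp add: field_simps power2_eq_square)
  also have "\<dots> \<le> 27 / 1000 * d^2 / (1/2)"
    using n1 \<Lambda> mult_mono[OF n1 \<Lambda>] by (intro divide_left_mono) auto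
  also have "\<dots> \<le> d / 4" using d0 d1 by (simp add: power2_eq_square)
  finally show ?thesis .
qed

lemma block_count_bounds:
  fixes n :: nat and \<Lambda> d :: real
  assumes n1: "1 \<le> n" and \<Lambda>: "1/2 \<le> \<Lambda>" and d0: "0 < d" and d1: "d < 1"
  defines "L \<equiv> nat \<lceil>16 * real n * \<Lambda> / d^2\<rceil>"
  shows "16 * real n * \<Lambda> / d^2 \<le> L" "real (L * n) \<le> 18 * real n ^ 2 * \<Lambda> / d^2"
proof -
  define X where "X = real n ^ 2 * \<Lambda> / d^2"
  have d2: "0 < d^2" "d^2 \<le> 1" using d0 d1 by (auto simp: power_le_one)
  have pos: "0 < 16 * real n * \<Lambda> / d^2" using n1 \<Lambda> d0 by (intro divide_pos_pos mult_pos_pos) auto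
  show "16 * real n * \<Lambda> / d^2 \<le> L" unfolding L_def by linarith
  have L_le: "real L \<le> 16 * real n * \<Lambda> / d^2 + 1" unfolding L_def using pos by linarith
  have "real n * 1 \<le> real n ^ 2 * (2 * \<Lambda>)"
    using n1 \<Lambda> by (intro mult_mono) (auto simp: power2_eq_square)
  also have "\<dots> \<le> real n ^ 2 * (2 * \<Lambda>) / d^2"
    using d2 \<Lambda> by (subst pos_le_divide_eq[OF d2(1)]) (simp add: mult_left_le)
  finally have n_le: "real n \<le> 2 * X" unfolding X_def by (simp add: algebra_simps)
  have "real (L * n) = real L * real n" by simp
  also have "\<dots> \<le> (16 * real n * \<Lambda> / d^2 + 1) * real n" using L_le by (intro mult_right_mono) auto
  also have "\<dots> = 16 * X + real n" unfolding X_def by (simp add: algebra_simps power2_eq_square)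
  also have "\<dots> \<le> 18 * X" using n_le by linarith
  also have "18 * X = 18 * real n ^ 2 * \<Lambda> / d^2" unfolding X_def by simp
  finally show "real (L * n) \<le> 18 * real n ^ 2 * \<Lambda> / d^2" .
qed

lemma exists_block_length:
  fixes n m :: nat and \<Lambda> d :: real
  assumes n1: "1 \<le> n" and \<Lambda>: "1/2 \<le> \<Lambda>" and d0: "0 < d" and d1: "d < 1"
    and mb: "1000 * real n ^ 4 * \<Lambda>^2 / d^4 \<le> m"
  obtains L :: nat where "0 < L" "L * n < m"
    "\<And>t (h :: real) I. t \<le> L * n \<Longrightarrow> h \<le> \<Lambda> / L \<Longrightarrow> I \<le> t * \<Lambda> / (m - t) \<Longrightarrow>
       sqrt (n * h) + n * sqrt I + n * (t / (m - t)) \<le> d"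
proof -
  define L where "L = nat \<lceil>16 * real n * \<Lambda> / d^2\<rceil>"
  note L_ge = block_count_bounds(1)[OF n1 \<Lambda> d0 d1, folded L_def]
    and Ln = block_count_bounds(2)[OF n1 \<Lambda> d0 d1, folded L_def]
  have "0 < 16 * real n * \<Lambda> / d^2" using n1 \<Lambda> d0 by (intro divide_pos_pos mult_pos_pos) auto
  then have L0: "0 < L" using L_ge by (metis of_nat_0_less_iff order_less_le_trans)
  have n1': "1 \<le> real n" using n1 by simp
  have "real (L * n) < real m" using Ln block_threshold_bounds[OF n1' \<Lambda> d0 d1 mb] by linarith
  then have Lnm: "L * n < m" by (simp only: of_nat_less_iff)
  have "sqrt (n * h) + n * sqrt I + n * (t / (m - t)) \<le> d"
    if t: "t \<le> L * n" and h: "h \<le> \<Lambda> / L" and I: "I \<le> t * \<Lambda> / (m - t)" for t :: nat and h I :: real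
  proof -
    have tb: "real t \<le> 18 * real n ^ 2 * \<Lambda> / d^2" using t Ln by (meson of_nat_le_iff order_trans)
    have mt: "real (m - t) = real m - real t" using t Lnm by simp
    have "sqrt (n * h) + n * sqrt I + n * (t / (m - t)) \<le> d / 4 + d / 4 + d / 4"
      unfolding mt
    proof (intro add_mono)
      show "sqrt (n * h) \<le> d / 4" by (rule entropy_term_le[OF n1' \<Lambda> d0 L_ge h])
      show "n * sqrt I \<le> d / 4" using I mt by (intro info_term_le[OF n1' \<Lambda> d0 d1 mb tb]) simp_all
      show "n * (t / (real m - real t)) \<le> d / 4" by (rule position_term_le[OF n1' \<Lambda> d0 d1 mb tb]) simp
    qed
    also have "\<dots> \<le> d" using d0 by simp
    finally show ?thesis .
  qed
  with L0 Lnm show thesis by (rule that)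
qed

section \<open>Robustness of the subsampled learner\<close>

lemma expectation_subsample_corrupted_ge_main:
  fixes p :: "'z pmf" and g :: "'z list \<Rightarrow> real" and \<eta> \<delta> \<delta>\<^sub>a :: real
  assumes finite_Z: "finite Z" and set_pmf_p: "set_pmf p \<subseteq> Z" and card_Z: "2 \<le> card Z"
    and adv: "\<And>S. S \<in> set_pmf (replicate_pmf m p) \<Longrightarrow>
      length (adv S) = m \<and> set (adv S) \<subseteq> Z \<and> card {i. i < m \<and> adv S ! i \<noteq> S ! i} \<le> k"
    and k\<eta>: "real k \<le> \<eta> * m" and \<eta>0: "0 \<le> \<eta>"
    and robust: "\<And>D'. set_pmf D' \<subseteq> Z \<Longrightarrow> tv_dist p D' \<le> \<eta> \<Longrightarrow> 1 - \<delta> \<le> measure_pmf.expectation (replicate_pmf n D') g"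
    and g0: "\<And>y. 0 \<le> g y" and g1: "\<And>y. g y \<le> 1" and n1: "1 \<le> n"
    and \<delta>\<^sub>a: "0 < \<delta>\<^sub>a" "\<delta>\<^sub>a < 1" and m_ge: "1000 * real n ^ 4 * ln (card Z) ^ 2 / \<delta>\<^sub>a ^ 4 \<le> m"
  shows "1 - \<delta> - \<delta>\<^sub>a \<le> measure_pmf.expectation (replicate_pmf m p) (\<lambda>S. measure_pmf.expectation (subsample n (adv S)) g)"
proof -
  have "1/2 \<le> ln (2 :: real)" by (metis ln_add1_ge one_add_one zero_le_one)
  also have "\<dots> \<le> ln (card Z)" using card_Z by simp
  finally have \<Lambda>: "1/2 \<le> ln (card Z)" .
  obtain L where L: "0 < L" "L * n < m" and error_terms:
    "\<And>t (h :: real) I. t \<le> L * n \<Longrightarrow> h \<le> ln (card Z) / L \<Longrightarrow> I \<le> t * ln (card Z) / (m - t) \<Longrightarrow>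
       sqrt (n * h) + n * sqrt I + n * (t / (m - t)) \<le> \<delta>\<^sub>a"
    using exists_block_length[OF n1 \<Lambda> \<delta>\<^sub>a(1,2) m_ge] by blast
  interpret S: nasty_subsampling p Z adv m k "L * n + 1"
    using finite_Z set_pmf_p adv L by unfold_locales auto
  obtain j where j: "j < L" "S.next_entropy (j * n) - S.next_entropy (j * n + n) \<le> ln (card Z) / L"
    using S.exists_block_small_entropy_drop[OF L(1), of n] by auto
  have jn: "j * n + n \<le> L * n" using j(1) by (metis add.commute mult_Suc mult_le_mono1 Suc_leI)
  have "1 - \<delta> - \<delta>\<^sub>a \<le> 1 - \<delta> - (sqrt (n * (S.next_entropy (j * n) - S.next_entropy (j * n + n)))
      + n * sqrt (S.next_info (j * n)) + n * (j * n / (m - j * n)))"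
    by (intro diff_left_mono error_terms[OF _ j(2) S.next_info_le]) (use jn in linarith)+
  also have "\<dots> \<le> measure_pmf.expectation S.\<mu> (\<lambda>\<omega>. g (S.window (j * n) n \<omega>))"
    using jn by (intro S.expectation_window_ge[OF robust g0 g1 k\<eta> \<eta>0]) auto
  also have "\<dots> = measure_pmf.expectation (replicate_pmf m p) (\<lambda>S. measure_pmf.expectation (subsample n (adv S)) g)"
    using jn by (intro S.expectation_window_eq_subsample) auto
  finally show ?thesis .
qed

theorem expectation_subsample_corrupted_ge:
  fixes p :: "'z pmf" and g :: "'z list \<Rightarrow> real" and \<eta> \<delta> \<delta>\<^sub>a :: real
  assumes finite_Z: "finite Z" and set_pmf_p: "set_pmf p \<subseteq> Z" and card_Z: "2 \<le> card Z"
    and adv: "\<And>S. S \<in> set_pmf (replicate_pmf m p) \<Longrightarrow>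
      length (adv S) = m \<and> set (adv S) \<subseteq> Z \<and> card {i. i < m \<and> adv S ! i \<noteq> S ! i} \<le> k"
    and k\<eta>: "real k \<le> \<eta> * m" and \<eta>0: "0 \<le> \<eta>"
    and robust: "\<And>D'. set_pmf D' \<subseteq> Z \<Longrightarrow> tv_dist p D' \<le> \<eta> \<Longrightarrow> 1 - \<delta> \<le> measure_pmf.expectation (replicate_pmf n D') g"
    and g0: "\<And>y. 0 \<le> g y" and g1: "\<And>y. g y \<le> 1"
    and \<delta>\<^sub>a: "0 < \<delta>\<^sub>a" and m_ge: "1000 * real n ^ 4 * ln (card Z) ^ 2 / \<delta>\<^sub>a ^ 4 \<le> m"
  shows "1 - (\<delta> + \<delta>\<^sub>a) \<le> measure_pmf.expectation (replicate_pmf m p) (\<lambda>S. measure_pmf.expectation (subsample n (adv S)) g)"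
proof -
  have "tv_dist p p \<le> \<eta>" using \<eta>0 by (intro tv_dist_le) simp
  then have clean: "1 - \<delta> \<le> measure_pmf.expectation (replicate_pmf n p) g"
    by (rule robust[OF set_pmf_p])
  consider "1 \<le> \<delta>\<^sub>a" | "n = 0" | "1 \<le> n" "\<delta>\<^sub>a < 1" by linarith
  then show ?thesis
  proof cases
    case 1
    have "measure_pmf.expectation (replicate_pmf n p) g \<le> 1"
      using finite_subset[OF set_pmf_p finite_Z] g0 g1
      by (intro expectation_pmf_unit_interval finite_set_replicate_pmf)
    with clean have "0 \<le> \<delta>" by simp
    moreover have "0 \<le> measure_pmf.expectation (replicate_pmf m p)
        (\<lambda>S. measure_pmf.expectation (subsample n (adv S)) g)"
      using g0 by (simp add: integral_nonneg)
    ultimately show ?thesis using 1 by simp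
  next
    case 2
    have "{is. distinct is \<and> length is = 0 \<and> set is \<subseteq> {..<length T}} = {[]}" for T :: "'z list"
      by auto
    then have "subsample 0 T = return_pmf []" for T :: "'z list"
      unfolding subsample_def by (simp add: pmf_of_set_singleton)
    then show ?thesis using 2 clean \<delta>\<^sub>a by simp
  next
    case 3
    then show ?thesis
      using expectation_subsample_corrupted_ge_main[OF assms(1-9) 3(1) \<delta>\<^sub>a 3(2) m_ge] by simp
  qed
qed

lemma success_prob_eq_expectation:
  "success_prob D c \<epsilon> S A = measure_pmf.expectation S (\<lambda>ys. measure_pmf.prob (A ys) {h. err D c h \<le> \<epsilon>})"
  unfolding success_prob_def by (rule measure_bind_pmf)

lemma success_prob_compose_subsample:
  "success_prob D c \<epsilon> (map_pmf adv S) (compose_subsample A n)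
     = measure_pmf.expectation S (\<lambda>S. measure_pmf.expectation (subsample n (adv S))
         (\<lambda>ys. measure_pmf.prob (A ys) {h. err D c h \<le> \<epsilon>}))"
  unfolding success_prob_eq_expectation compose_subsample_def by (simp add: measure_bind_pmf)

lemma TV_learns_robust:
  assumes "TV_learns X C D n A \<epsilon> \<delta> \<eta>" "c \<in> C" "set_pmf D' \<subseteq> X \<times> UNIV" "tv_dist (labeled D c) D' \<le> \<eta>"
  shows "1 - \<delta> \<le> measure_pmf.expectation (replicate_pmf n D') (\<lambda>ys. measure_pmf.prob (A ys) {h. err D c h \<le> \<epsilon>})"
proof -
  have "1 - \<delta> \<le> success_prob D c \<epsilon> (replicate_pmf n D') A"
    using assms unfolding TV_learns_def by blast
  then show ?thesis by (simp add: success_prob_eq_expectation)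
qed

lemma nasty_adversary_changes_le:
  assumes "nasty_adversary X D c \<eta> m adv" "S \<in> set_pmf (replicate_pmf m (labeled D c))"
  shows "length (adv S) = m \<and> set (adv S) \<subseteq> X \<times> UNIV \<and> card {i. i < m \<and> adv S ! i \<noteq> S ! i} \<le> nat \<lfloor>\<eta> * m\<rfloor>"
proof -
  have "length (adv S) = m \<and> set (adv S) \<subseteq> X \<times> UNIV \<and>
      (\<exists>I \<subseteq> {..<m}. card I = nat \<lfloor>\<eta> * m\<rfloor> \<and> (\<forall>i<m. i \<notin> I \<longrightarrow> adv S ! i = S ! i))"
    using assms unfolding nasty_adversary_def by blast
  then obtain I where I: "I \<subseteq> {..<m}" "card I = nat \<lfloor>\<eta> * m\<rfloor>" "\<forall>i<m. i \<notin> I \<longrightarrow> adv S ! i = S ! i"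
    and len: "length (adv S) = m" "set (adv S) \<subseteq> X \<times> UNIV"
    by blast
  have "card {i. i < m \<and> adv S ! i \<noteq> S ! i} \<le> card I"
    using I(1,3) by (intro card_mono) (auto intro: finite_subset)
  then show ?thesis using I(2) len by simp
qed

theorem proposition4p10:
  "\<exists>K::real. K > 0 \<and>
    (\<forall>(X::nat set) (C::hypothesis set) (D::nat pmf) (n::nat) (A::algorithm)
        (\<epsilon>::real) (\<delta>::real) (\<eta>::real) (\<delta>\<^sub>a::real) (m::nat).
      finite X \<longrightarrow> set_pmf D \<subseteq> X \<longrightarrow> 0 \<le> \<eta> \<longrightarrow> \<delta>\<^sub>a > 0 \<longrightarrow>
      TV_learns X C D n A \<epsilon> \<delta> \<eta> \<longrightarrow>
      n \<le> m \<longrightarrow>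
      real m \<ge> K * real n ^ 4 * ln (2 * real (card X)) ^ 2 / \<delta>\<^sub>a ^ 4 \<longrightarrow>
      nasty_learns X C D m (compose_subsample A n) \<epsilon> (\<delta> + \<delta>\<^sub>a) \<eta>)"
proof (rule exI[of _ 1000], intro conjI allI impI)
  fix X C D n A \<epsilon> \<delta> \<eta> \<delta>\<^sub>a m
  assume X: "finite X" "set_pmf D \<subseteq> X" and \<eta>0: "0 \<le> \<eta>" and \<delta>\<^sub>a: "\<delta>\<^sub>a > 0"
    and TV: "TV_learns X C D n A \<epsilon> \<delta> \<eta>"
    and "n \<le> m" \<comment> \<open>not needed\<close>
    and m_ge: "1000 * real n ^ 4 * ln (2 * real (card X)) ^ 2 / \<delta>\<^sub>a ^ 4 \<le> real m"
  have "X \<noteq> {}" using X(2) set_pmf_not_empty[of D] by blast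
  then have card_Z: "card (X \<times> (UNIV :: bool set)) = 2 * card X" "2 \<le> card (X \<times> (UNIV :: bool set))"
    using X(1) by (simp_all add: card_cartesian_product Suc_le_eq card_gt_0_iff)
  have m_ge': "1000 * real n ^ 4 * ln (card (X \<times> (UNIV :: bool set))) ^ 2 / \<delta>\<^sub>a ^ 4 \<le> m"
    using m_ge card_Z(1) by simp
  show "nasty_learns X C D m (compose_subsample A n) \<epsilon> (\<delta> + \<delta>\<^sub>a) \<eta>"
    unfolding nasty_learns_def success_prob_compose_subsample
  proof (intro ballI allI impI)
    fix c adv assume c: "c \<in> C" and adv: "nasty_adversary X D c \<eta> m adv"
    have "set_pmf (labeled D c) \<subseteq> X \<times> UNIV" using X(2) by (auto simp: labeled_def)
    moreover have "real (nat \<lfloor>\<eta> * m\<rfloor>) \<le> \<eta> * m" using \<eta>0 by simp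
    ultimately show "1 - (\<delta> + \<delta>\<^sub>a) \<le> measure_pmf.expectation (replicate_pmf m (labeled D c))
        (\<lambda>S. measure_pmf.expectation (subsample n (adv S)) (\<lambda>ys. measure_pmf.prob (A ys) {h. err D c h \<le> \<epsilon>}))"
      using X(1) TV_learns_robust[OF TV c] nasty_adversary_changes_le[OF adv] \<eta>0 \<delta>\<^sub>a m_ge' card_Z(2)
      by (intro expectation_subsample_corrupted_ge) auto
  qed
qed simp

end
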